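(* Let $K$ be a field, $s\ge2$, $S=K[t_1,\ldots,t_s]$ with each $t_i$ of degree $1$, and let $L\subset S$ be a graded lattice ideal with $\dim S/L=1$. Then there are positive integers $n_1,\ldots,n_{s-1}$ such that (a) $L'=(t_1^{n_1}-t_s^{n_1},\ldots,t_{s-1}^{n_{s-1}}-t_s^{n_{s-1}})\subset L$; (b) ${\rm reg}(S/(t_s,L))\le {\rm reg}(S/(t_s,L'))=\sum_{i=1}^{s-1}(n_i-1)+1$; (c) $H_L(d)=H_L(d-1)=\deg S/L$ for all $d\ge \sum_{i=1}^{s-1}(n_i-1)+1$.
   Context: A lattice is a subgroup $\mathcal{L}$ of $\mathbb{Z}^s$. For $a\in\mathbb{Z}^s$ write $a=a^+-a^-$ with $a^+,a^-\in\mathbb{N}^s$ of disjoint supports, and $t^c=t_1^{c_1}\cdots t_s^{c_s}$. The lattice ideal of $\mathcal{L}$ is $I(\mathcal{L})=(\{t^{a^+}-t^{a^-}: a\in\mathcal{L}\})$; a lattice ideal is an ideal of this form, and it is graded if generated by homogeneous polynomials. For a graded ideal $I\subset S$, $S_d$ denotes the homogeneous polynomials of degree $d$ (with $0$), $I_d=I\cap S_d$, and $H_I(d)=\dim_K S_d/I_d$ is the Hilbert function; the Hilbert polynomial $h_I(t)=c_kt^k+\cdots$ is the unique polynomial with $h_I(d)=H_I(d)$ for $d\gg0$ ($k=-1$ meaning $h_I=0$), and $\dim S/I=k+1$. The degree $\deg S/I$ is $c_k\,k!$ if $k\ge0$ and $\dim_K(S/I)$ if $k=-1$. The index of regularity ${\rm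 reg}(S/I)$ is the least integer $r\ge0$ such that $h_I(d)=H_I(d)$ for all $d\ge r$. *)

theory Defs
  imports "HOL-Library.Poly_Mapping" "HOL-Computational_Algebra.Polynomial"
begin

text \<open>Polynomial ring S = K[t_v : v in 'v] over a field K; the variables are
  indexed by a finite type 'v, so s = CARD('v).\<close>

type_synonym ('v, 'a) mpoly = "('v \<Rightarrow>\<^sub>0 nat) \<Rightarrow>\<^sub>0 'a"

definition var :: "'v \<Rightarrow> ('v, 'a::comm_ring_1) mpoly" where
  "var v = Poly_Mapping.single (Poly_Mapping.single v 1) 1"

definition mono :: "('v::finite \<Rightarrow> nat) \<Rightarrow> ('v, 'a::comm_ring_1) mpoly" where
  "mono c = (\<Prod>v\<in>UNIV. var v ^ c v)"

definition scal :: "'a::comm_ring_1 \<Rightarrow> ('v, 'a) mpoly \<Rightarrow> ('v, 'a) mpoly" where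
  "scal c p = Poly_Mapping.single 0 c * p"

definition mdeg :: "('v \<Rightarrow>\<^sub>0 nat) \<Rightarrow> nat" where
  "mdeg \<alpha> = (\<Sum>v\<in>Poly_Mapping.keys \<alpha>. Poly_Mapping.lookup \<alpha> v)"

definition hom_part :: "nat \<Rightarrow> ('v, 'a::comm_ring_1) mpoly set" where
  "hom_part d = {f. \<forall>\<alpha>\<in>Poly_Mapping.keys f. mdeg \<alpha> = d}"

definition homogeneous :: "('v, 'a::comm_ring_1) mpoly \<Rightarrow> bool" where
  "homogeneous f \<longleftrightarrow> (\<exists>d. f \<in> hom_part d)"

inductive_set ideal_gen :: "'b::comm_ring_1 set \<Rightarrow> 'b set" for G where
  gen: "g \<in> G \<Longrightarrow> g \<in> ideal_gen G"
| zero: "0 \<in> ideal_gen G"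
| add: "f \<in> ideal_gen G \<Longrightarrow> g \<in> ideal_gen G \<Longrightarrow> f + g \<in> ideal_gen G"
| mult: "f \<in> ideal_gen G \<Longrightarrow> r * f \<in> ideal_gen G"

definition is_ideal :: "'b::comm_ring_1 set \<Rightarrow> bool" where
  "is_ideal I \<longleftrightarrow> ideal_gen I = I"

definition graded_ideal :: "('v, 'a::comm_ring_1) mpoly set \<Rightarrow> bool" where
  "graded_ideal I \<longleftrightarrow> (\<exists>G. (\<forall>g\<in>G. homogeneous g) \<and> I = ideal_gen G)"

definition is_lattice :: "('v \<Rightarrow> int) set \<Rightarrow> bool" where
  "is_lattice \<L> \<longleftrightarrow> (\<lambda>_. 0) \<in> \<L> \<and> (\<forall>a\<in>\<L>. \<forall>b\<in>\<L>. (\<lambda>v. a v + b v) \<in> \<L>) \<and> (\<forall>a\<in>\<L>. (\<lambda>v. - a v) \<in> \<L>)"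

definition pos_part :: "('v \<Rightarrow> int) \<Rightarrow> 'v \<Rightarrow> nat" where
  "pos_part a = (\<lambda>v. nat (a v))"

definition neg_part :: "('v \<Rightarrow> int) \<Rightarrow> 'v \<Rightarrow> nat" where
  "neg_part a = (\<lambda>v. nat (- a v))"

definition lattice_ideal_of :: "('v::finite \<Rightarrow> int) set \<Rightarrow> ('v, 'a::comm_ring_1) mpoly set" where
  "lattice_ideal_of \<L> = ideal_gen {mono (pos_part a) - mono (neg_part a) | a. a \<in> \<L>}"

definition is_lattice_ideal :: "('v::finite, 'a::comm_ring_1) mpoly set \<Rightarrow> bool" where
  "is_lattice_ideal I \<longleftrightarrow> (\<exists>\<L>. is_lattice \<L> \<and> I = lattice_ideal_of \<L>)"

text \<open>Hilbert function H_I(d) = dim_K S_d/I_d = dim_K S_d - dim_K I_d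
  (S_d is finite dimensional)\<close>
definition hilbert_fun :: "('v, 'a::field) mpoly set \<Rightarrow> nat \<Rightarrow> nat" where
  "hilbert_fun I d =
     (vector_space.dim scal (hom_part d :: ('v, 'a) mpoly set))
     - (vector_space.dim scal (I \<inter> hom_part d))"

definition hilbert_poly :: "('v, 'a::field) mpoly set \<Rightarrow> real poly" where
  "hilbert_poly I = (THE p. \<forall>\<^sub>F d in sequentially. poly p (real d) = real (hilbert_fun I d))"

text \<open>dim S/I = k + 1 where k = deg h_I (k = -1 when h_I = 0)\<close>
definition quot_dim :: "('v, 'a::field) mpoly set \<Rightarrow> int" where
  "quot_dim I = (if hilbert_poly I = 0 then 0 else int (degree (hilbert_poly I)) + 1)"

definition quot_deg :: "('v, 'a::field) mpoly set \<Rightarrow> real" where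
  "quot_deg I = (if hilbert_poly I = 0 then real (\<Sum>d\<in>{d. hilbert_fun I d \<noteq> 0}. hilbert_fun I d)
                 else lead_coeff (hilbert_poly I) * fact (degree (hilbert_poly I)))"

definition reg_index :: "('v, 'a::field) mpoly set \<Rightarrow> nat" where
  "reg_index I = (LEAST r. \<forall>d\<ge>r. poly (hilbert_poly I) (real d) = real (hilbert_fun I d))"

end

theory Submission
  imports Defs "HOL-Library.Multiset" "HOL-Library.FuncSet" "HOL-Library.Countable"
begin

text \<open>Pairing polynomials with indicator
  functions of lattice classes shows that, modulo a graded lattice ideal L, the only linear
  relations among the monomials of degree d are t^\<alpha> \<equiv> t^\<beta> for \<alpha> - \<beta> in the lattice, so H_L(d)
  counts the lattice classes of degree d. Representing each class by its least element for a
  term order, the non-standard exponents form a monoid ideal, and Dickson's lemma makes H_L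
  eventually polynomial. If for some v \<noteq> z no positive multiple of e_v - e_z were in the lattice,
  the monomials t_v^k t_z^(d-k) would lie in d + 1 distinct classes, contradicting dim S/L = 1;
  hence t_v^(n_v) - t_z^(n_v) \<in> L for suitable n_v > 0. With these binomials every monomial of
  degree > \<Sum>(n_v - 1) can be moved within its class to one divisible by t_z, so from then on
  multiplication by t_z is a bijection between classes and H_L is constant. Finally S/(t_z, L')
  has the box monomials (\<alpha>_z = 0, \<alpha>_v < n_v) as a basis, whose top degree is \<Sum>(n_v - 1), and it
  surjects onto S/(t_z, L).\<close>

lemma scal_single: "scal c (Poly_Mapping.single \<alpha> b) = Poly_Mapping.single \<alpha> (c * b)"
  by (simp add: scal_def mult_single)

lemma lookup_scal: "Poly_Mapping.lookup (scal c p) \<alpha> = c * Poly_Mapping.lookup p \<alpha>"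
  by (simp add: scal_def mult_map_scale_conv_mult[symmetric] map.rep_eq when_def)

interpretation mpoly: vector_space "scal :: 'a::field \<Rightarrow> ('v, 'a) mpoly \<Rightarrow> _"
proof (unfold_locales, goal_cases)
  case (1 a x y) then show ?case by (simp add: scal_def algebra_simps)
next
  case (2 a b x) then show ?case by (simp add: scal_def algebra_simps single_add)
next
  case (3 a b x) then show ?case by (simp add: scal_def mult.assoc[symmetric] mult_single)
next
  case (4 x) then show ?case by (simp add: scal_def)
qed

lemma poly_mapping_sum_single:
  assumes "finite A" "Poly_Mapping.keys f \<subseteq> A"
  shows "f = (\<Sum>\<alpha>\<in>A. Poly_Mapping.single \<alpha> (Poly_Mapping.lookup f \<alpha>))"
proof (rule poly_mapping_eqI)
  fix k
  have "(\<Sum>\<alpha>\<in>A. Poly_Mapping.lookup (Poly_Mapping.single \<alpha> (Poly_Mapping.lookup f \<alpha>)) k)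
      = (\<Sum>\<alpha>\<in>A. if \<alpha> = k then Poly_Mapping.lookup f \<alpha> else 0)"
    by (rule sum.cong) (auto simp: lookup_single when_def)
  also have "\<dots> = Poly_Mapping.lookup f k"
    using assms by (auto simp: sum.delta in_keys_iff)
  finally show "Poly_Mapping.lookup f k
      = Poly_Mapping.lookup (\<Sum>\<alpha>\<in>A. Poly_Mapping.single \<alpha> (Poly_Mapping.lookup f \<alpha>)) k"
    by (simp add: lookup_sum)
qed

lemma single_one_eq_iff:
  "Poly_Mapping.single x (1::'a::zero_neq_one) = Poly_Mapping.single y 1 \<longleftrightarrow> x = y"
  by (metis lookup_single_eq lookup_single_not_eq zero_neq_one)

lemma independent_unitriangular:
  fixes b :: "('v \<Rightarrow>\<^sub>0 nat) \<Rightarrow> ('v, 'a::field) mpoly"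
  assumes fin: "finite A" and inj: "inj_on b A"
    and tri: "\<And>\<alpha> \<beta>. \<alpha> \<in> A \<Longrightarrow> \<beta> \<in> A \<Longrightarrow> Poly_Mapping.lookup (b \<beta>) \<alpha> = (if \<alpha> = \<beta> then 1 else 0)"
  shows "mpoly.independent (b ` A)"
proof (rule mpoly.independent_if_scalars_zero)
  show "finite (b ` A)" using fin by simp
  fix u x assume sum0: "(\<Sum>x\<in>b ` A. scal (u x) x) = 0" and x: "x \<in> b ` A"
  then obtain \<alpha> where \<alpha>: "\<alpha> \<in> A" "x = b \<alpha>" by auto
  have "0 = Poly_Mapping.lookup (\<Sum>x\<in>b ` A. scal (u x) x) \<alpha>" using sum0 by simp
  also have "\<dots> = (\<Sum>\<beta>\<in>A. u (b \<beta>) * Poly_Mapping.lookup (b \<beta>) \<alpha>)"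
    by (simp add: sum.reindex[OF inj] lookup_sum lookup_scal)
  also have "\<dots> = (\<Sum>\<beta>\<in>A. if \<beta> = \<alpha> then u (b \<beta>) else 0)"
    by (rule sum.cong) (use tri \<alpha>(1) in auto)
  also have "\<dots> = u x" using \<alpha> fin by (simp add: sum.delta')
  finally show "u x = 0" by simp
qed

lemma dim_keys_subset:
  assumes "finite A"
  shows "mpoly.dim {f :: ('v, 'a::field) mpoly. Poly_Mapping.keys f \<subseteq> A} = card A"
proof -
  let ?b = "\<lambda>\<alpha>. Poly_Mapping.single \<alpha> (1::'a) :: ('v, 'a) mpoly"
  have inj: "inj_on ?b A" by (auto simp: inj_on_def single_one_eq_iff)
  have "mpoly.dim {f :: ('v, 'a) mpoly. Poly_Mapping.keys f \<subseteq> A} = card (?b ` A)"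
  proof (rule mpoly.dim_unique[OF _ _ independent_unitriangular[OF assms inj] refl])
    show "?b ` A \<subseteq> {f. Poly_Mapping.keys f \<subseteq> A}" by auto
    show "{f. Poly_Mapping.keys f \<subseteq> A} \<subseteq> mpoly.span (?b ` A)"
    proof
      fix f :: "('v, 'a) mpoly" assume "f \<in> {f. Poly_Mapping.keys f \<subseteq> A}"
      then have "f = (\<Sum>\<alpha>\<in>A. scal (Poly_Mapping.lookup f \<alpha>) (?b \<alpha>))"
        using poly_mapping_sum_single[OF assms, of f] by (simp add: scal_single)
      also have "\<dots> \<in> mpoly.span (?b ` A)"
        by (intro mpoly.span_sum mpoly.span_scale mpoly.span_base) auto
      finally show "f \<in> mpoly.span (?b ` A)" .
    qed
  qed (auto simp: lookup_single when_def)
  then show ?thesis using card_image[OF inj] by simp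
qed

lemma mdeg_eq_sum_UNIV: "mdeg (\<alpha> :: 'v::finite \<Rightarrow>\<^sub>0 nat) = (\<Sum>v\<in>UNIV. Poly_Mapping.lookup \<alpha> v)"
  unfolding mdeg_def by (intro sum.mono_neutral_left) (auto simp: in_keys_iff)

lemma mdeg_add: "mdeg (\<alpha> + \<beta> :: 'v::finite \<Rightarrow>\<^sub>0 nat) = mdeg \<alpha> + mdeg \<beta>"
  by (simp add: mdeg_eq_sum_UNIV lookup_add sum.distrib)

lemma mdeg_single [simp]: "mdeg (Poly_Mapping.single (v::'v::finite) k) = k"
  by (simp add: mdeg_def)

lemma lookup_le_mdeg: "Poly_Mapping.lookup \<alpha> v \<le> mdeg (\<alpha> :: 'v::finite \<Rightarrow>\<^sub>0 nat)"
  unfolding mdeg_eq_sum_UNIV by (rule member_le_sum) auto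

lemma mdeg_eq_lookup_plus_sum:
  "mdeg (\<alpha> :: 'v::finite \<Rightarrow>\<^sub>0 nat) = Poly_Mapping.lookup \<alpha> z + (\<Sum>v\<in>UNIV - {z}. Poly_Mapping.lookup \<alpha> v)"
  unfolding mdeg_eq_sum_UNIV by (simp add: sum.remove[of UNIV z])

definition monomials_deg :: "nat \<Rightarrow> ('v \<Rightarrow>\<^sub>0 nat) set" where
  "monomials_deg d = {\<alpha>. mdeg \<alpha> = d}"

lemma finite_monomials_deg: "finite (monomials_deg d :: ('v::finite \<Rightarrow>\<^sub>0 nat) set)"
proof -
  have "finite {c::'v \<Rightarrow> nat. \<forall>v. c v \<le> d}"
    by (rule finite_subset[OF _ finite_PiE[of UNIV "\<lambda>_. {..d}"]]) (auto simp: PiE_def extensional_def)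
  then have "finite (Abs_poly_mapping ` {c::'v \<Rightarrow> nat. \<forall>v. c v \<le> d})" by simp
  moreover have "monomials_deg d \<subseteq> Abs_poly_mapping ` {c::'v \<Rightarrow> nat. \<forall>v. c v \<le> d}"
  proof
    fix \<alpha> :: "'v \<Rightarrow>\<^sub>0 nat" assume "\<alpha> \<in> monomials_deg d"
    then have "\<forall>v. Poly_Mapping.lookup \<alpha> v \<le> d"
      using lookup_le_mdeg[of \<alpha>] by (auto simp: monomials_deg_def)
    then show "\<alpha> \<in> Abs_poly_mapping ` {c::'v \<Rightarrow> nat. \<forall>v. c v \<le> d}"
      by (intro image_eqI[of _ _ "Poly_Mapping.lookup \<alpha>"]) (auto simp: lookup_inverse)
  qed
  ultimately show ?thesis by (rule finite_subset[rotated])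
qed

lemma size_eq_sum_count_UNIV: "size (M :: 'v::finite multiset) = (\<Sum>v\<in>UNIV. count M v)"
proof -
  have "size M = (\<Sum>v\<in>set_mset M. count M v)" by (simp add: size_multiset_overloaded_eq)
  also have "\<dots> = (\<Sum>v\<in>UNIV. count M v)"
    by (intro sum.mono_neutral_left) (auto simp: count_eq_zero_iff)
  finally show ?thesis .
qed

lemma card_monomials_deg:
  "card (monomials_deg d :: ('v::finite \<Rightarrow>\<^sub>0 nat) set) = (card (UNIV :: 'v set) + d - 1) choose d"
proof -
  let ?f = "\<lambda>M :: 'v multiset. Abs_poly_mapping (count M)"
  have inj: "inj_on ?f (multisets_of_size UNIV d)"
  proof (rule inj_onI)
    fix M N assume "?f M = ?f N"
    then have "Poly_Mapping.lookup (?f M) = Poly_Mapping.lookup (?f N)" by simp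
    then show "M = N" by (simp add: multiset_eqI)
  qed
  have "?f ` multisets_of_size UNIV d = monomials_deg d"
  proof
    show "?f ` multisets_of_size UNIV d \<subseteq> monomials_deg d"
      by (auto simp: multisets_of_size_def monomials_deg_def mdeg_eq_sum_UNIV size_eq_sum_count_UNIV)
    show "monomials_deg d \<subseteq> ?f ` multisets_of_size UNIV d"
    proof
      fix \<alpha> :: "'v \<Rightarrow>\<^sub>0 nat" assume \<alpha>: "\<alpha> \<in> monomials_deg d"
      define M where "M = Abs_multiset (Poly_Mapping.lookup \<alpha>)"
      have count_M: "count M = Poly_Mapping.lookup \<alpha>"
        unfolding M_def by (rule count_Abs_multiset) simp
      have "size M = d"
        using \<alpha> by (simp add: size_eq_sum_count_UNIV count_M monomials_deg_def mdeg_eq_sum_UNIV)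
      moreover have "?f M = \<alpha>" by (simp add: count_M lookup_inverse)
      ultimately show "\<alpha> \<in> ?f ` multisets_of_size UNIV d"
        by (auto simp: multisets_of_size_def intro!: image_eqI[of _ _ M])
    qed
  qed
  then have "card (monomials_deg d :: ('v \<Rightarrow>\<^sub>0 nat) set) = card (multisets_of_size (UNIV :: 'v set) d)"
    using card_image[OF inj] by simp
  also have "\<dots> = (card (UNIV :: 'v set) + d - 1) choose d" by (rule card_multisets_of_size) simp
  finally show ?thesis .
qed

lemma hom_part_eq_keys_subset: "hom_part d = {f. Poly_Mapping.keys f \<subseteq> monomials_deg d}"
  by (auto simp: hom_part_def monomials_deg_def)

lemma dim_hom_part:
  "mpoly.dim (hom_part d :: ('v::finite, 'a::field) mpoly set) = card (monomials_deg d :: ('v \<Rightarrow>\<^sub>0 nat) set)"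
  by (simp add: hom_part_eq_keys_subset dim_keys_subset finite_monomials_deg)

lemma var_power: "var v ^ k = Poly_Mapping.single (Poly_Mapping.single v k) (1::'a::comm_ring_1)"
  by (induction k) (simp_all add: var_def mult_single single_add[symmetric])

lemma prod_single_one:
  "(\<Prod>i\<in>I. Poly_Mapping.single (a i) (1::'a::comm_ring_1)) = Poly_Mapping.single (\<Sum>i\<in>I. a i) 1"
  by (induction I rule: infinite_finite_induct) (simp_all add: mult_single)

lemma sum_single_UNIV: "(\<Sum>v\<in>UNIV. Poly_Mapping.single v (c v)) = Abs_poly_mapping (c :: 'v::finite \<Rightarrow> nat)"
proof (rule poly_mapping_eqI)
  fix k
  have "(\<Sum>v\<in>UNIV. Poly_Mapping.lookup (Poly_Mapping.single v (c v)) k) = (\<Sum>v\<in>UNIV. if v = k then c v else 0)"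
    by (rule sum.cong) (auto simp: lookup_single when_def)
  then show "Poly_Mapping.lookup (\<Sum>v\<in>UNIV. Poly_Mapping.single v (c v)) k
      = Poly_Mapping.lookup (Abs_poly_mapping c) k"
    by (simp add: lookup_sum)
qed

lemma mono_eq_single:
  "(mono c :: ('v::finite, 'a::comm_ring_1) mpoly) = Poly_Mapping.single (Abs_poly_mapping c) 1"
  by (simp add: mono_def var_power prod_single_one sum_single_UNIV)

lemma ideal_gen_least:
  assumes "0 \<in> C" "\<And>f g. f \<in> C \<Longrightarrow> g \<in> C \<Longrightarrow> f + g \<in> C" "\<And>f r. f \<in> C \<Longrightarrow> r * f \<in> C"
    and "X \<subseteq> C"
  shows "ideal_gen X \<subseteq> C"
proof
  fix f assume "f \<in> ideal_gen X"
  then show "f \<in> C" by induction (use assms in auto)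
qed

lemma ideal_gen_superset: "X \<subseteq> ideal_gen X"
  by (auto intro: ideal_gen.gen)

lemma ideal_gen_subset: "X \<subseteq> ideal_gen Y \<Longrightarrow> ideal_gen X \<subseteq> ideal_gen Y"
  by (rule ideal_gen_least) (auto intro: ideal_gen.intros)

lemma ideal_gen_mono: "X \<subseteq> Y \<Longrightarrow> ideal_gen X \<subseteq> ideal_gen Y"
  using ideal_gen_subset ideal_gen_superset by blast

lemma ideal_gen_idem: "ideal_gen (ideal_gen X) = ideal_gen X"
  by (intro antisym ideal_gen_subset ideal_gen_superset order_refl)

lemma ideal_gen_diff: "f \<in> ideal_gen X \<Longrightarrow> g \<in> ideal_gen X \<Longrightarrow> f - g \<in> ideal_gen X"
  using ideal_gen.add[OF _ ideal_gen.mult[of g X "-1"], of f] by simp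

lemma ideal_gen_sum: "(\<And>i. i \<in> I \<Longrightarrow> p i \<in> ideal_gen X) \<Longrightarrow> (\<Sum>i\<in>I. p i) \<in> ideal_gen X"
  by (induction I rule: infinite_finite_induct) (auto intro: ideal_gen.intros)

lemma ideal_gen_keys_disjoint:
  assumes down: "\<And>\<beta> \<gamma>. \<beta> + \<gamma> \<in> B \<Longrightarrow> \<gamma> \<in> B"
    and gens: "\<And>g. g \<in> X \<Longrightarrow> Poly_Mapping.keys g \<inter> B = {}"
    and "f \<in> ideal_gen X"
  shows "Poly_Mapping.keys (f :: ('v, 'a::comm_ring_1) mpoly) \<inter> B = {}"
  using assms(3)
proof induction
  case (add f g)
  then show ?case using keys_add[of f g] by auto
next
  case (mult f r)
  then show ?case using keys_mult[of r f] down by fastforce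
qed (use gens in auto)

section \<open>Pairing polynomials with functions on monomials\<close>

definition pairing :: "(('v \<Rightarrow>\<^sub>0 nat) \<Rightarrow> 'a) \<Rightarrow> ('v, 'a::comm_ring_1) mpoly \<Rightarrow> 'a" where
  "pairing h f = (\<Sum>\<alpha>\<in>Poly_Mapping.keys f. Poly_Mapping.lookup f \<alpha> * h \<alpha>)"

lemma pairing_eq_sum_superset:
  assumes "finite A" "Poly_Mapping.keys f \<subseteq> A"
  shows "pairing h f = (\<Sum>\<alpha>\<in>A. Poly_Mapping.lookup f \<alpha> * h \<alpha>)"
  unfolding pairing_def using assms by (intro sum.mono_neutral_left) (auto simp: in_keys_iff)

lemma pairing_add: "pairing h (f + g) = pairing h f + pairing h g"
proof -
  define A where "A = Poly_Mapping.keys f \<union> Poly_Mapping.keys g"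
  have fin: "finite A" by (simp add: A_def)
  have "pairing h (f + g) = (\<Sum>\<alpha>\<in>A. Poly_Mapping.lookup (f + g) \<alpha> * h \<alpha>)"
    using keys_add[of f g] by (intro pairing_eq_sum_superset fin) (auto simp: A_def)
  also have "\<dots> = (\<Sum>\<alpha>\<in>A. Poly_Mapping.lookup f \<alpha> * h \<alpha>) + (\<Sum>\<alpha>\<in>A. Poly_Mapping.lookup g \<alpha> * h \<alpha>)"
    by (simp add: lookup_add algebra_simps sum.distrib)
  also have "\<dots> = pairing h f + pairing h g"
    by (subst (1 2) pairing_eq_sum_superset[OF fin]) (auto simp: A_def)
  finally show ?thesis .
qed

lemma pairing_zero [simp]: "pairing h 0 = 0"
  by (simp add: pairing_def)

lemma pairing_diff: "pairing h (f - g) = pairing h f - pairing h g"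
  using pairing_add[of h "f - g" g] by (simp add: algebra_simps)

lemma pairing_sum: "pairing h (\<Sum>i\<in>I. p i) = (\<Sum>i\<in>I. pairing h (p i))"
  by (induction I rule: infinite_finite_induct) (auto simp: pairing_add)

lemma pairing_single: "pairing h (Poly_Mapping.single \<alpha> c) = c * h \<alpha>"
  by (simp add: pairing_def)

lemma mult_eq_sum_single:
  "(r::('v, 'a::comm_ring_1) mpoly) * f = (\<Sum>\<beta>\<in>Poly_Mapping.keys r. \<Sum>\<gamma>\<in>Poly_Mapping.keys f.
      Poly_Mapping.single (\<beta> + \<gamma>) (Poly_Mapping.lookup r \<beta> * Poly_Mapping.lookup f \<gamma>))"
proof -
  have "r * f = (\<Sum>\<beta>\<in>Poly_Mapping.keys r. Poly_Mapping.single \<beta> (Poly_Mapping.lookup r \<beta>)) *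
       (\<Sum>\<gamma>\<in>Poly_Mapping.keys f. Poly_Mapping.single \<gamma> (Poly_Mapping.lookup f \<gamma>))"
    by (subst (1) poly_mapping_sum_single[of "Poly_Mapping.keys r" r], simp, simp,
        subst (1) poly_mapping_sum_single[of "Poly_Mapping.keys f" f], simp_all)
  then show ?thesis by (simp add: sum_product mult_single)
qed

lemma pairing_mult:
  "pairing h (r * f) = (\<Sum>\<beta>\<in>Poly_Mapping.keys r. Poly_Mapping.lookup r \<beta> * pairing (\<lambda>\<alpha>. h (\<beta> + \<alpha>)) f)"
  by (subst mult_eq_sum_single)
    (simp add: pairing_sum pairing_single pairing_def[of _ f] sum_distrib_left mult.assoc)

lemma pairing_ideal_gen_eq_0:
  assumes shift: "\<And>h \<beta>. h \<in> H \<Longrightarrow> (\<lambda>\<alpha>. h (\<beta> + \<alpha>)) \<in> H"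
    and gens: "\<And>g h. g \<in> X \<Longrightarrow> h \<in> H \<Longrightarrow> pairing h g = 0"
    and "f \<in> ideal_gen X" "h \<in> H"
  shows "pairing h (f :: ('v, 'a::comm_ring_1) mpoly) = 0"
proof -
  have "ideal_gen X \<subseteq> {f. \<forall>h\<in>H. pairing h f = 0}"
    by (rule ideal_gen_least) (auto simp: pairing_add pairing_mult shift gens)
  then show ?thesis using assms(3,4) by auto
qed

section \<open>Dickson's lemma for exponent vectors\<close>

definition le_pw :: "('v \<Rightarrow>\<^sub>0 nat) \<Rightarrow> ('v \<Rightarrow>\<^sub>0 nat) \<Rightarrow> bool" where
  "le_pw \<alpha> \<beta> \<longleftrightarrow> (\<forall>v. Poly_Mapping.lookup \<alpha> v \<le> Poly_Mapping.lookup \<beta> v)"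

lemma le_pw_refl: "le_pw \<alpha> \<alpha>"
  by (simp add: le_pw_def)

lemma le_pw_trans: "le_pw \<alpha> \<beta> \<Longrightarrow> le_pw \<beta> \<gamma> \<Longrightarrow> le_pw \<alpha> \<gamma>"
  unfolding le_pw_def using order_trans by blast

lemma le_pw_add: "le_pw \<alpha> (\<alpha> + \<gamma>)"
  by (simp add: le_pw_def lookup_add)

lemma le_pw_add_diff: "le_pw \<alpha> \<beta> \<Longrightarrow> \<beta> = \<alpha> + (\<beta> - \<alpha>)"
  by (rule poly_mapping_eqI) (simp add: le_pw_def lookup_add lookup_minus)

lemma le_pw_diff_iff: "le_pw (\<mu> - m) \<gamma> \<longleftrightarrow> le_pw \<mu> (m + \<gamma>)"
  unfolding le_pw_def lookup_add lookup_minus by (intro iff_allI) arith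

lemma mdeg_strict_mono:
  assumes "le_pw \<alpha> \<beta>" "\<alpha> \<noteq> \<beta>"
  shows "mdeg \<alpha> < mdeg (\<beta> :: 'v::finite \<Rightarrow>\<^sub>0 nat)"
proof -
  obtain v where "Poly_Mapping.lookup \<alpha> v \<noteq> Poly_Mapping.lookup \<beta> v"
    using assms(2) by (metis poly_mapping_eqI)
  then have "Poly_Mapping.lookup \<alpha> v < Poly_Mapping.lookup \<beta> v"
    using assms(1) by (simp add: le_pw_def le_neq_trans)
  then show ?thesis unfolding mdeg_eq_sum_UNIV
    by (intro sum_strict_mono_ex1) (use assms(1) in \<open>auto simp: le_pw_def\<close>)
qed

lemma incseq_subseq_nat: "\<exists>g. strict_mono g \<and> incseq (\<lambda>n. x (g n))" for x :: "nat \<Rightarrow> nat"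
proof -
  obtain f where f: "strict_mono f" "monoseq (\<lambda>n. x (f n))" using seq_monosub by blast
  show ?thesis
  proof (cases "incseq (\<lambda>n. x (f n))")
    case True then show ?thesis using f(1) by blast
  next
    case False
    then have dec: "decseq (\<lambda>n. x (f n))" using f(2) monoseq_iff by blast
    obtain n where n: "\<And>k. x (f n) \<le> x (f k)"
      using ex_has_least_nat[of "\<lambda>_. True" 0 "\<lambda>k. x (f k)"] by auto
    have const: "x (f (k + n)) = x (f n)" for k
      using decseqD[OF dec, of n "k + n"] n[of "k + n"] by simp
    have "strict_mono (\<lambda>k. f (k + n))" using f(1) by (auto simp: strict_mono_def)
    moreover have "incseq (\<lambda>k. x (f (k + n)))" by (simp add: incseq_def const)
    ultimately show ?thesis by blast
  qed
qed

lemma incseq_subseq_lookup: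
  fixes f :: "nat \<Rightarrow> ('v \<Rightarrow>\<^sub>0 nat)"
  assumes "finite V"
  shows "\<exists>g. strict_mono g \<and> (\<forall>v\<in>V. incseq (\<lambda>n. Poly_Mapping.lookup (f (g n)) v))"
  using assms
proof (induction V rule: finite_induct)
  case empty show ?case using strict_mono_id by blast
next
  case (insert w V)
  then obtain g :: "nat \<Rightarrow> nat"
    where g: "strict_mono g" "\<forall>v\<in>V. incseq (\<lambda>n. Poly_Mapping.lookup (f (g n)) v)" by blast
  obtain h :: "nat \<Rightarrow> nat"
    where h: "strict_mono h" "incseq (\<lambda>n. Poly_Mapping.lookup (f (g (h n))) w)"
    using incseq_subseq_nat[of "\<lambda>n. Poly_Mapping.lookup (f (g n)) w"] by blast
  have "strict_mono (\<lambda>n. g (h n))" using strict_mono_o[OF g(1) h(1)] by (simp add: o_def)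
  moreover have "incseq (\<lambda>n. Poly_Mapping.lookup (f (g (h n))) v)" if "v \<in> V" for v
    unfolding incseq_def
  proof (intro allI impI)
    fix m n :: nat assume "m \<le> n"
    then have "h m \<le> h n" using strict_mono_less_eq[OF h(1)] by simp
    then show "Poly_Mapping.lookup (f (g (h m))) v \<le> Poly_Mapping.lookup (f (g (h n))) v"
      using g(2) that unfolding incseq_def by blast
  qed
  ultimately show ?case using h(2) by (intro exI[of _ "\<lambda>n. g (h n)"]) simp
qed

lemma dickson:
  fixes f :: "nat \<Rightarrow> ('v::finite \<Rightarrow>\<^sub>0 nat)"
  shows "\<exists>i j. i < j \<and> le_pw (f i) (f j)"
proof -
  obtain g :: "nat \<Rightarrow> nat"
    where g: "strict_mono g" "\<forall>v. incseq (\<lambda>n. Poly_Mapping.lookup (f (g n)) v)"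
    using incseq_subseq_lookup[of UNIV f] by auto
  have "g 0 < g 1" using g(1) by (simp add: strict_mono_def)
  moreover have "le_pw (f (g 0)) (f (g 1))" using g(2) by (auto simp: le_pw_def incseq_def)
  ultimately show ?thesis by blast
qed

definition minimal_elements :: "('v \<Rightarrow>\<^sub>0 nat) set \<Rightarrow> ('v \<Rightarrow>\<^sub>0 nat) set" where
  "minimal_elements E = {\<alpha>\<in>E. \<forall>\<beta>\<in>E. le_pw \<beta> \<alpha> \<longrightarrow> \<beta> = \<alpha>}"

definition up_closure :: "('v \<Rightarrow>\<^sub>0 nat) set \<Rightarrow> ('v \<Rightarrow>\<^sub>0 nat) set" where
  "up_closure M = {\<alpha>. \<exists>m\<in>M. le_pw m \<alpha>}"

lemma ex_minimal_element_le:
  "\<alpha> \<in> E \<Longrightarrow> \<exists>m\<in>minimal_elements E. le_pw m (\<alpha> :: 'v::finite \<Rightarrow>\<^sub>0 nat)"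
proof (induction "mdeg \<alpha>" arbitrary: \<alpha> rule: less_induct)
  case less
  show ?case
  proof (cases "\<alpha> \<in> minimal_elements E")
    case True then show ?thesis using le_pw_refl by blast
  next
    case False
    then obtain \<beta> where \<beta>: "\<beta> \<in> E" "le_pw \<beta> \<alpha>" "\<beta> \<noteq> \<alpha>"
      using less.prems by (auto simp: minimal_elements_def)
    have "mdeg \<beta> < mdeg \<alpha>" using \<beta>(2,3) by (rule mdeg_strict_mono)
    from less.hyps[OF this \<beta>(1)] obtain m where "m \<in> minimal_elements E" "le_pw m \<beta>" by blast
    then show ?thesis using \<beta>(2) le_pw_trans by blast
  qed
qed

lemma finite_minimal_elements: "finite (minimal_elements (E :: ('v::finite \<Rightarrow>\<^sub>0 nat) set))"
proof (rule ccontr)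
  assume "infinite (minimal_elements E)"
  then obtain f :: "nat \<Rightarrow> _" where f: "inj f" "range f \<subseteq> minimal_elements E"
    using infinite_countable_subset by blast
  obtain i j where ij: "i < j" "le_pw (f i) (f j)" using dickson[of f] by blast
  have "f i \<in> E" "f j \<in> minimal_elements E" using f(2) by (auto simp: minimal_elements_def)
  then have "f i = f j" using ij(2) by (auto simp: minimal_elements_def)
  then show False using f(1) ij(1) by (auto dest: injD)
qed

lemma up_closure_minimal_elements:
  assumes up: "\<And>\<alpha> \<gamma>. \<alpha> \<in> E \<Longrightarrow> \<alpha> + \<gamma> \<in> E"
  shows "up_closure (minimal_elements E) = (E :: ('v::finite \<Rightarrow>\<^sub>0 nat) set)"
proof
  show "E \<subseteq> up_closure (minimal_elements E)"
    using ex_minimal_element_le by (auto simp: up_closure_def)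
  show "up_closure (minimal_elements E) \<subseteq> E"
  proof
    fix \<alpha> assume "\<alpha> \<in> up_closure (minimal_elements E)"
    then obtain m where m: "m \<in> E" "le_pw m \<alpha>" by (auto simp: up_closure_def minimal_elements_def)
    from up[OF m(1), of "\<alpha> - m"] show "\<alpha> \<in> E" using le_pw_add_diff[OF m(2)] by simp
  qed
qed

section \<open>Eventually polynomial counting functions\<close>

definition eventually_poly :: "(nat \<Rightarrow> nat) \<Rightarrow> bool" where
  "eventually_poly f \<longleftrightarrow> (\<exists>p::real poly. \<forall>\<^sub>F d in sequentially. poly p (real d) = real (f d))"

lemma eventually_poly_cong:
  assumes "eventually_poly f" "\<forall>\<^sub>F d in sequentially. f d = g d"
  shows "eventually_poly g"
proof -
  obtain p where "\<forall>\<^sub>F d in sequentially. poly p (real d) = real (f d)"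
    using assms(1) by (auto simp: eventually_poly_def)
  with assms(2) have "\<forall>\<^sub>F d in sequentially. poly p (real d) = real (g d)"
    by eventually_elim simp
  then show ?thesis by (auto simp: eventually_poly_def)
qed

lemma eventually_poly_diff:
  assumes "eventually_poly f" "eventually_poly g" "\<forall>\<^sub>F d in sequentially. g d \<le> f d"
  shows "eventually_poly (\<lambda>d. f d - g d)"
proof -
  obtain p q where p: "\<forall>\<^sub>F d in sequentially. poly p (real d) = real (f d)"
    and q: "\<forall>\<^sub>F d in sequentially. poly q (real d) = real (g d)"
    using assms(1,2) by (auto simp: eventually_poly_def)
  have "\<forall>\<^sub>F d in sequentially. poly (p - q) (real d) = real (f d - g d)"
    using p q assms(3) by eventually_elim (simp add: of_nat_diff)
  then show ?thesis unfolding eventually_poly_def by blast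
qed

lemma eventually_poly_shift:
  assumes "eventually_poly f"
  shows "eventually_poly (\<lambda>d. f (d - c))"
proof -
  obtain p N where N: "\<And>d. d \<ge> N \<Longrightarrow> poly p (real d) = real (f d)"
    using assms by (auto simp: eventually_poly_def eventually_sequentially)
  have "poly (pcompose p [:- real c, 1:]) (real d) = real (f (d - c))" if "N + c \<le> d" for d
    using N[of "d - c"] that by (simp add: poly_pcompose of_nat_diff)
  then show ?thesis
    unfolding eventually_poly_def eventually_sequentially by (intro exI[of _ "pcompose p [:- real c, 1:]"]) blast
qed

lemma eventually_poly_binomial: "eventually_poly (\<lambda>d. (d + k) choose k)"
proof -
  define p where "p = (\<Prod>i\<in>{0..<k}. [: (real k - real i) / real (k - i), 1 / real (k - i) :])"
  have "poly p (real d) = real ((d + k) choose k)" for d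
  proof -
    have "real ((d + k) choose k) = (real (d + k) gchoose k)" by (rule binomial_gbinomial)
    also have "\<dots> = (\<Prod>i = 0..<k. (real (d + k) - of_nat i) / of_nat (k - i))"
      by (rule gbinomial_altdef_of_nat)
    also have "\<dots> = poly p (real d)"
      unfolding p_def poly_prod by (intro prod.cong refl) (simp add: of_nat_diff field_simps)
    finally show ?thesis by simp
  qed
  then show ?thesis unfolding eventually_poly_def by (intro exI[of _ p] always_eventually allI) simp
qed

lemma eventually_poly_card_monomials_deg:
  "eventually_poly (\<lambda>d. card (monomials_deg d :: ('v::finite \<Rightarrow>\<^sub>0 nat) set))"
proof -
  define k where "k = card (UNIV :: 'v set) - 1"
  have "card (UNIV :: 'v set) = k + 1" using k_def finite_UNIV_card_ge_0[where 'a='v] by simp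
  then have "card (monomials_deg d :: ('v \<Rightarrow>\<^sub>0 nat) set) = (d + k) choose k" for d
    by (simp add: card_monomials_deg binomial_symmetric[of k "d + k"] add.commute)
  then show ?thesis using eventually_poly_binomial[of k] by (simp add: eventually_poly_def)
qed

text \<open>Removing the multiples of one more generator m: those of degree d are m times the
  monomials of degree d - deg m avoiding the quotient ideal M : m.\<close>

lemma card_monomials_deg_diff_up_closure_insert:
  fixes m :: "'v::finite \<Rightarrow>\<^sub>0 nat" and M :: "('v \<Rightarrow>\<^sub>0 nat) set"
  assumes "mdeg m \<le> d"
  defines "M' \<equiv> (\<lambda>\<mu>. \<mu> - m) ` M"
  shows "card (monomials_deg d - up_closure (insert m M))
      = card (monomials_deg d - up_closure M) - card (monomials_deg (d - mdeg m) - up_closure M')"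
    and "card (monomials_deg (d - mdeg m) - up_closure M') \<le> card (monomials_deg d - up_closure M)"
proof -
  define S where "S = {\<alpha> \<in> monomials_deg d - up_closure M. le_pw m \<alpha>}"
  have S_sub: "S \<subseteq> monomials_deg d - up_closure M" by (auto simp: S_def)
  have fin: "finite (monomials_deg d - up_closure M)" using finite_monomials_deg by auto
  have up_iff: "m + \<gamma> \<in> up_closure M \<longleftrightarrow> \<gamma> \<in> up_closure M'" for \<gamma>
    by (auto simp: up_closure_def M'_def le_pw_diff_iff)
  have "S = (\<lambda>\<gamma>. m + \<gamma>) ` (monomials_deg (d - mdeg m) - up_closure M')"
  proof
    show "S \<subseteq> (\<lambda>\<gamma>. m + \<gamma>) ` (monomials_deg (d - mdeg m) - up_closure M')"
    proof
      fix \<alpha> assume \<alpha>: "\<alpha> \<in> S"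
      have \<alpha>_eq: "\<alpha> = m + (\<alpha> - m)" by (rule le_pw_add_diff) (use \<alpha> in \<open>simp add: S_def\<close>)
      have "mdeg \<alpha> = mdeg m + mdeg (\<alpha> - m)" by (subst \<alpha>_eq) (simp add: mdeg_add)
      then have "\<alpha> - m \<in> monomials_deg (d - mdeg m) - up_closure M'"
        using \<alpha> up_iff[of "\<alpha> - m"] \<alpha>_eq[symmetric] by (auto simp: S_def monomials_deg_def)
      with \<alpha>_eq show "\<alpha> \<in> (\<lambda>\<gamma>. m + \<gamma>) ` (monomials_deg (d - mdeg m) - up_closure M')" by blast
    qed
    show "(\<lambda>\<gamma>. m + \<gamma>) ` (monomials_deg (d - mdeg m) - up_closure M') \<subseteq> S"
      using assms(1) up_iff by (auto simp: S_def monomials_deg_def mdeg_add le_pw_add)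
  qed
  moreover have "inj_on (\<lambda>\<gamma>. m + \<gamma>) (monomials_deg (d - mdeg m) - up_closure M')"
    by (auto simp: inj_on_def)
  ultimately have card_S: "card S = card (monomials_deg (d - mdeg m) - up_closure M')"
    by (simp add: card_image)
  have "monomials_deg d - up_closure (insert m M) = (monomials_deg d - up_closure M) - S"
    by (auto simp: S_def up_closure_def)
  then show "card (monomials_deg d - up_closure (insert m M))
      = card (monomials_deg d - up_closure M) - card (monomials_deg (d - mdeg m) - up_closure M')"
    using card_Diff_subset[OF finite_subset[OF S_sub fin] S_sub] card_S by simp
  show "card (monomials_deg (d - mdeg m) - up_closure M') \<le> card (monomials_deg d - up_closure M)"
    using card_mono[OF fin S_sub] card_S by simp
qed

lemma eventually_poly_card_diff_up_closure:
  assumes "finite M"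
  shows "eventually_poly (\<lambda>d. card (monomials_deg d - up_closure (M :: ('v::finite \<Rightarrow>\<^sub>0 nat) set)))"
  using assms
proof (induction "card M" arbitrary: M rule: less_induct)
  case less
  show ?case
  proof (cases "M = {}")
    case True
    then show ?thesis using eventually_poly_card_monomials_deg by (simp add: up_closure_def)
  next
    case False
    then obtain m M' where M: "M = insert m M'" "m \<notin> M'" by (metis equals0I insert_Diff Diff_iff singletonI)
    have "finite M'" "card M' < card M" using less.prems M by auto
    moreover have "card ((\<lambda>\<mu>. \<mu> - m) ` M') < card M"
      using card_image_le[OF \<open>finite M'\<close>] \<open>card M' < card M\<close> le_less_trans by blast
    ultimately have IH: "eventually_poly (\<lambda>d. card (monomials_deg d - up_closure M'))"
      "eventually_poly (\<lambda>d. card (monomials_deg d - up_closure ((\<lambda>\<mu>. \<mu> - m) ` M')))"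
      using less.hyps by auto
    have large: "\<forall>\<^sub>F d in sequentially. mdeg m \<le> d" by (rule eventually_ge_at_top)
    have "\<forall>\<^sub>F d in sequentially. card (monomials_deg (d - mdeg m) - up_closure ((\<lambda>\<mu>. \<mu> - m) ` M'))
        \<le> card (monomials_deg d - up_closure M')"
      using large by eventually_elim (rule card_monomials_deg_diff_up_closure_insert(2))
    with IH have "eventually_poly (\<lambda>d. card (monomials_deg d - up_closure M')
        - card (monomials_deg (d - mdeg m) - up_closure ((\<lambda>\<mu>. \<mu> - m) ` M')))"
      by (intro eventually_poly_diff eventually_poly_shift)
    moreover have "\<forall>\<^sub>F d in sequentially. card (monomials_deg d - up_closure M')
        - card (monomials_deg (d - mdeg m) - up_closure ((\<lambda>\<mu>. \<mu> - m) ` M'))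
        = card (monomials_deg d - up_closure M)"
      using large unfolding M
      by eventually_elim (rule card_monomials_deg_diff_up_closure_insert(1)[symmetric])
    ultimately show ?thesis by (rule eventually_poly_cong)
  qed
qed

lemma eventually_poly_card_diff_monoid_ideal:
  assumes "\<And>\<alpha> \<gamma>. \<alpha> \<in> E \<Longrightarrow> \<alpha> + \<gamma> \<in> E"
  shows "eventually_poly (\<lambda>d. card (monomials_deg d - (E :: ('v::finite \<Rightarrow>\<^sub>0 nat) set)))"
  using eventually_poly_card_diff_up_closure[OF finite_minimal_elements[of E]]
  by (simp add: up_closure_minimal_elements assms)

lemma poly_eq_if_eventually_eq:
  assumes "\<forall>\<^sub>F d in sequentially. poly p (real d) = poly q (real d)"
  shows "p = (q :: real poly)"
proof (rule ccontr)
  assume "p \<noteq> q"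
  then have fin: "finite {x. poly (p - q) x = 0}" by (intro poly_roots_finite) simp
  obtain N where N: "\<And>d. d \<ge> N \<Longrightarrow> poly p (real d) = poly q (real d)"
    using assms by (auto simp: eventually_sequentially)
  have "real ` {N..} \<subseteq> {x. poly (p - q) x = 0}" using N by auto
  with fin have "finite (real ` {N..})" using finite_subset by blast
  moreover have "infinite (real ` {N..})"
    using finite_imageD[of real "{N..}"] infinite_Ici[of N] by (auto simp: inj_on_def)
  ultimately show False by blast
qed

lemma hilbert_poly_eqI:
  assumes "\<forall>\<^sub>F d in sequentially. poly p (real d) = real (hilbert_fun I d)"
  shows "hilbert_poly I = p"
  unfolding hilbert_poly_def
proof (rule the_equality)
  fix q assume "\<forall>\<^sub>F d in sequentially. poly q (real d) = real (hilbert_fun I d)"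
  with assms have "\<forall>\<^sub>F d in sequentially. poly q (real d) = poly p (real d)"
    by eventually_elim simp
  then show "q = p" by (rule poly_eq_if_eventually_eq)
qed (rule assms)

lemma hilbert_poly_eq_const:
  assumes "\<And>d. d \<ge> M \<Longrightarrow> hilbert_fun I d = c"
  shows "hilbert_poly I = [:real c:]"
  by (rule hilbert_poly_eqI) (use assms in \<open>auto simp: eventually_sequentially\<close>)

lemma quot_deg_eq_const:
  assumes "\<And>d. d \<ge> M \<Longrightarrow> hilbert_fun I d = c" and "quot_dim I = 1"
  shows "quot_deg I = real c"
  using hilbert_poly_eq_const[of M I c, OF assms(1)] assms(2)
  by (auto simp: quot_deg_def quot_dim_def split: if_splits)

lemma reg_index_le:
  assumes "\<And>d. d > M \<Longrightarrow> hilbert_fun I d = 0"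
  shows "reg_index I \<le> M + 1"
proof -
  have "hilbert_poly I = 0"
    using hilbert_poly_eq_const[of "Suc M" I 0] assms by simp
  then have "\<forall>d\<ge>M + 1. poly (hilbert_poly I) (real d) = real (hilbert_fun I d)"
    using assms by auto
  then show ?thesis unfolding reg_index_def by (rule Least_le)
qed

lemma reg_index_eq:
  assumes "\<And>d. d > M \<Longrightarrow> hilbert_fun I d = 0" and "hilbert_fun I M \<noteq> 0"
  shows "reg_index I = M + 1"
proof -
  have "hilbert_poly I = 0"
    using hilbert_poly_eq_const[of "Suc M" I 0] assms(1) by simp
  with assms show ?thesis
    unfolding reg_index_def by (intro Least_equality) (auto simp: not_less_eq_eq)
qed

section \<open>Lattice classes of monomials and standard monomials\<close>

text \<open>A term order on exponent vectors: transport the lexicographic order of \<open>nat \<Rightarrow>\<^sub>0 nat\<close>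
  along an injective additive coding of the finitely many variables by natural numbers.\<close>

definition lex_code :: "('v::finite \<Rightarrow>\<^sub>0 nat) \<Rightarrow> (nat \<Rightarrow>\<^sub>0 nat)" where
  "lex_code \<alpha> = Abs_poly_mapping (\<lambda>i. if i \<in> range (to_nat :: 'v \<Rightarrow> nat)
     then Poly_Mapping.lookup \<alpha> (from_nat i) else 0)"

lemma lookup_lex_code:
  "Poly_Mapping.lookup (lex_code (\<alpha> :: 'v::finite \<Rightarrow>\<^sub>0 nat)) i
     = (if i \<in> range (to_nat :: 'v \<Rightarrow> nat) then Poly_Mapping.lookup \<alpha> (from_nat i) else 0)"
proof -
  have "finite {i. (if i \<in> range (to_nat :: 'v \<Rightarrow> nat) then Poly_Mapping.lookup \<alpha> (from_nat i) else 0) \<noteq> 0}"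
    by (rule finite_subset[of _ "range (to_nat :: 'v \<Rightarrow> nat)"]) auto
  then show ?thesis unfolding lex_code_def by simp
qed

lemma lex_code_add: "lex_code (\<alpha> + \<beta>) = lex_code \<alpha> + lex_code \<beta>"
  by (rule poly_mapping_eqI) (simp add: lookup_lex_code lookup_add)

lemma lex_code_inj: "inj (lex_code :: ('v::finite \<Rightarrow>\<^sub>0 nat) \<Rightarrow> _)"
proof (rule injI)
  fix \<alpha> \<beta> :: "'v \<Rightarrow>\<^sub>0 nat" assume eq: "lex_code \<alpha> = lex_code \<beta>"
  show "\<alpha> = \<beta>"
  proof (rule poly_mapping_eqI)
    fix v :: 'v
    have "Poly_Mapping.lookup (lex_code \<alpha>) (to_nat v) = Poly_Mapping.lookup (lex_code \<beta>) (to_nat v)"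
      using eq by simp
    then show "Poly_Mapping.lookup \<alpha> v = Poly_Mapping.lookup \<beta> v" by (simp add: lookup_lex_code)
  qed
qed

locale int_lattice =
  fixes \<Lambda> :: "('v::finite \<Rightarrow> int) set"
  assumes is_lattice: "is_lattice \<Lambda>"
begin

lemma lattice_zero: "(\<lambda>_. 0) \<in> \<Lambda>"
  using is_lattice by (simp add: is_lattice_def)

lemma lattice_add: "a \<in> \<Lambda> \<Longrightarrow> b \<in> \<Lambda> \<Longrightarrow> (\<lambda>v. a v + b v) \<in> \<Lambda>"
  using is_lattice by (simp add: is_lattice_def)

lemma lattice_uminus: "a \<in> \<Lambda> \<Longrightarrow> (\<lambda>v. - a v) \<in> \<Lambda>"
  using is_lattice by (simp add: is_lattice_def)

lemma lattice_diff: "a \<in> \<Lambda> \<Longrightarrow> b \<in> \<Lambda> \<Longrightarrow> (\<lambda>v. a v - b v) \<in> \<Lambda>"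
  using lattice_add[OF _ lattice_uminus[of b]] by simp

definition lat_equiv :: "('v \<Rightarrow>\<^sub>0 nat) \<Rightarrow> ('v \<Rightarrow>\<^sub>0 nat) \<Rightarrow> bool" where
  "lat_equiv \<alpha> \<beta> \<longleftrightarrow> (\<lambda>v. int (Poly_Mapping.lookup \<alpha> v) - int (Poly_Mapping.lookup \<beta> v)) \<in> \<Lambda>"

lemma lat_equiv_refl: "lat_equiv \<alpha> \<alpha>"
  using lattice_zero by (simp add: lat_equiv_def)

lemma lat_equiv_sym: "lat_equiv \<alpha> \<beta> \<Longrightarrow> lat_equiv \<beta> \<alpha>"
  unfolding lat_equiv_def by (drule lattice_uminus) simp

lemma lat_equiv_trans: "lat_equiv \<alpha> \<beta> \<Longrightarrow> lat_equiv \<beta> \<gamma> \<Longrightarrow> lat_equiv \<alpha> \<gamma>"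
  unfolding lat_equiv_def by (drule (1) lattice_add) simp

lemma lat_equiv_add_right_cancel: "lat_equiv (\<alpha> + \<gamma>) (\<beta> + \<gamma>) \<longleftrightarrow> lat_equiv \<alpha> \<beta>"
  by (simp add: lat_equiv_def lookup_add)

definition lat_class :: "('v \<Rightarrow>\<^sub>0 nat) \<Rightarrow> ('v \<Rightarrow>\<^sub>0 nat) set" where
  "lat_class \<alpha> = {\<beta>. mdeg \<beta> = mdeg \<alpha> \<and> lat_equiv \<beta> \<alpha>}"

lemma finite_lat_class: "finite (lat_class \<alpha>)"
  by (rule finite_subset[OF _ finite_monomials_deg[of "mdeg \<alpha>"]])
    (auto simp: lat_class_def monomials_deg_def)

lemma lat_class_self: "\<alpha> \<in> lat_class \<alpha>"
  by (simp add: lat_class_def lat_equiv_refl)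

lemma lat_class_eq: "\<beta> \<in> lat_class \<alpha> \<Longrightarrow> lat_class \<beta> = lat_class \<alpha>"
  unfolding lat_class_def by (auto intro: lat_equiv_trans lat_equiv_sym)

lemma lat_class_add: "\<beta> \<in> lat_class \<alpha> \<Longrightarrow> \<beta> + \<gamma> \<in> lat_class (\<alpha> + \<gamma>)"
  by (simp add: lat_class_def mdeg_add lat_equiv_add_right_cancel)

definition std :: "('v \<Rightarrow>\<^sub>0 nat) \<Rightarrow> ('v \<Rightarrow>\<^sub>0 nat)" where
  "std \<alpha> = inv_into (lat_class \<alpha>) lex_code (Min (lex_code ` lat_class \<alpha>))"

lemma std_in_lat_class: "std \<alpha> \<in> lat_class \<alpha>"
  and lex_code_std_le: "\<beta> \<in> lat_class \<alpha> \<Longrightarrow> lex_code (std \<alpha>) \<le> lex_code \<beta>"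
proof -
  have "Min (lex_code ` lat_class \<alpha>) \<in> lex_code ` lat_class \<alpha>"
    using Min_in finite_lat_class lat_class_self by blast
  then show "std \<alpha> \<in> lat_class \<alpha>" and "\<beta> \<in> lat_class \<alpha> \<Longrightarrow> lex_code (std \<alpha>) \<le> lex_code \<beta>"
    unfolding std_def using finite_lat_class by (auto simp: inv_into_into f_inv_into_f)
qed

lemma std_cong: "\<beta> \<in> lat_class \<alpha> \<Longrightarrow> std \<beta> = std \<alpha>"
  unfolding std_def by (simp add: lat_class_eq)

lemma std_std: "std (std \<alpha>) = std \<alpha>"
  by (rule std_cong[OF std_in_lat_class])

lemma mdeg_std: "mdeg (std \<alpha>) = mdeg \<alpha>"
  using std_in_lat_class by (simp add: lat_class_def)

lemma lat_equiv_std: "lat_equiv (std \<alpha>) \<alpha>"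
  using std_in_lat_class by (simp add: lat_class_def)

lemma lat_equiv_if_std_eq: "std \<alpha> = std \<beta> \<Longrightarrow> lat_equiv \<alpha> \<beta>"
  by (metis lat_equiv_std lat_equiv_sym lat_equiv_trans)

definition nonstd :: "('v \<Rightarrow>\<^sub>0 nat) set" where
  "nonstd = {\<alpha>. std \<alpha> \<noteq> \<alpha>}"

lemma std_notin_nonstd: "std \<alpha> \<notin> nonstd"
  by (simp add: nonstd_def std_std)

lemma std_eq_if_notin_nonstd: "\<beta> \<in> lat_class \<alpha> \<Longrightarrow> \<beta> \<notin> nonstd \<Longrightarrow> std \<alpha> = \<beta>"
  using std_cong by (fastforce simp: nonstd_def)

lemma nonstd_add: "\<alpha> \<in> nonstd \<Longrightarrow> \<alpha> + \<gamma> \<in> nonstd"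
proof -
  assume "\<alpha> \<in> nonstd"
  then have "lex_code (std \<alpha>) \<noteq> lex_code \<alpha>"
    by (simp add: nonstd_def inj_eq[OF lex_code_inj])
  then have "lex_code (std \<alpha>) < lex_code \<alpha>"
    using lex_code_std_le[OF lat_class_self] by (simp add: order_le_neq_trans)
  then have "lex_code (std \<alpha> + \<gamma>) < lex_code (\<alpha> + \<gamma>)"
    by (simp add: lex_code_add)
  moreover have "lex_code (std (\<alpha> + \<gamma>)) \<le> lex_code (std \<alpha> + \<gamma>)"
    by (intro lex_code_std_le lat_class_add std_in_lat_class)
  ultimately show "\<alpha> + \<gamma> \<in> nonstd" by (auto simp: nonstd_def)
qed

end

section \<open>The Hilbert function of a graded lattice ideal\<close>

locale graded_lattice_ideal = int_lattice \<Lambda> for \<Lambda> :: "('v::finite \<Rightarrow> int) set" +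
  fixes L :: "('v, 'a::field) mpoly set"
  assumes lattice_ideal: "L = lattice_ideal_of \<Lambda>"
    and graded: "graded_ideal L"
begin

lemma L_eq_ideal_gen: "L = ideal_gen {mono (pos_part a) - mono (neg_part a) | a. a \<in> \<Lambda>}"
  by (simp add: lattice_ideal lattice_ideal_of_def)

lemma ideal_gen_L: "ideal_gen L = L"
  by (simp add: L_eq_ideal_gen ideal_gen_idem)

lemma binomial_in_L:
  assumes "lat_equiv \<alpha> \<beta>"
  shows "Poly_Mapping.single \<alpha> 1 - Poly_Mapping.single \<beta> 1 \<in> L"
proof -
  define a where "a = (\<lambda>v. int (Poly_Mapping.lookup \<alpha> v) - int (Poly_Mapping.lookup \<beta> v))"
  have a: "a \<in> \<Lambda>" using assms by (simp add: lat_equiv_def a_def)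
  define \<mu> where "\<mu> = Abs_poly_mapping (\<lambda>v. min (Poly_Mapping.lookup \<alpha> v) (Poly_Mapping.lookup \<beta> v))"
  have \<alpha>: "\<alpha> = \<mu> + Abs_poly_mapping (pos_part a)"
    by (rule poly_mapping_eqI) (simp add: \<mu>_def lookup_add pos_part_def a_def)
  have \<beta>: "\<beta> = \<mu> + Abs_poly_mapping (neg_part a)"
    by (rule poly_mapping_eqI) (simp add: \<mu>_def lookup_add neg_part_def a_def)
  have "Poly_Mapping.single \<alpha> 1 - Poly_Mapping.single \<beta> 1
     = Poly_Mapping.single \<mu> 1 * (mono (pos_part a) - mono (neg_part a) :: ('v, 'a) mpoly)"
    by (subst \<alpha>, subst \<beta>) (simp add: mono_eq_single mult_single algebra_simps)
  also have "\<dots> \<in> L" unfolding L_eq_ideal_gen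
    by (intro ideal_gen.mult ideal_gen.gen) (use a in auto)
  finally show ?thesis .
qed

text \<open>The centre x ranges over all of \<int>^s, not only over exponent vectors, so that both
  families of indicators are closed under the shifts occurring in pairing_mult.\<close>

definition class_indicator :: "('v \<Rightarrow> int) \<Rightarrow> ('v \<Rightarrow>\<^sub>0 nat) \<Rightarrow> 'a" where
  "class_indicator x \<alpha> = (if (\<lambda>v. int (Poly_Mapping.lookup \<alpha> v) - x v) \<in> \<Lambda> then 1 else 0)"

definition class_indicator_deg :: "('v \<Rightarrow> int) \<Rightarrow> int \<Rightarrow> ('v \<Rightarrow>\<^sub>0 nat) \<Rightarrow> 'a" where
  "class_indicator_deg x d \<alpha> =
     (if (\<lambda>v. int (Poly_Mapping.lookup \<alpha> v) - x v) \<in> \<Lambda> \<and> int (mdeg \<alpha>) = d then 1 else 0)"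

lemma lookup_add_minus_shift:
  "(\<lambda>v. int (Poly_Mapping.lookup (\<beta> + \<alpha>) v) - x v)
     = (\<lambda>v. int (Poly_Mapping.lookup \<alpha> v) - (x v - int (Poly_Mapping.lookup \<beta> v)))"
  by (simp add: lookup_add algebra_simps)

lemma class_indicator_shift:
  "(\<lambda>\<alpha>. class_indicator x (\<beta> + \<alpha>)) = class_indicator (\<lambda>v. x v - int (Poly_Mapping.lookup \<beta> v))"
  unfolding class_indicator_def lookup_add_minus_shift ..

lemma class_indicator_deg_shift:
  "(\<lambda>\<alpha>. class_indicator_deg x d (\<beta> + \<alpha>))
     = class_indicator_deg (\<lambda>v. x v - int (Poly_Mapping.lookup \<beta> v)) (d - int (mdeg \<beta>))"
  unfolding class_indicator_deg_def lookup_add_minus_shift by (auto simp: mdeg_add)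

lemma pairing_class_indicator_generator:
  assumes a: "a \<in> \<Lambda>"
  shows "pairing (class_indicator x) (mono (pos_part a) - mono (neg_part a) :: ('v, 'a) mpoly) = 0"
proof -
  have pos: "(\<lambda>v. int (nat (a v)) - x v) = (\<lambda>v. (int (nat (- a v)) - x v) + a v)"
    and neg: "(\<lambda>v. int (nat (- a v)) - x v) = (\<lambda>v. (int (nat (a v)) - x v) - a v)"
    by auto
  have "(\<lambda>v. int (nat (a v)) - x v) \<in> \<Lambda> \<longleftrightarrow> (\<lambda>v. int (nat (- a v)) - x v) \<in> \<Lambda>"
  proof
    assume "(\<lambda>v. int (nat (a v)) - x v) \<in> \<Lambda>"
    from lattice_diff[OF this a] show "(\<lambda>v. int (nat (- a v)) - x v) \<in> \<Lambda>" unfolding neg .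
  next
    assume "(\<lambda>v. int (nat (- a v)) - x v) \<in> \<Lambda>"
    from lattice_add[OF this a] show "(\<lambda>v. int (nat (a v)) - x v) \<in> \<Lambda>" unfolding pos .
  qed
  then show ?thesis
    by (simp add: mono_eq_single pairing_diff pairing_single class_indicator_def pos_part_def neg_part_def)
qed

lemma pairing_class_indicator_eq_0: "f \<in> L \<Longrightarrow> pairing (class_indicator x) f = 0"
  unfolding L_eq_ideal_gen
proof (rule pairing_ideal_gen_eq_0[where H = "range class_indicator"])
  fix h \<beta> assume "h \<in> range class_indicator"
  then show "(\<lambda>\<alpha>. h (\<beta> + \<alpha>)) \<in> range class_indicator"
    using class_indicator_shift by auto
qed (use pairing_class_indicator_generator in auto)

lemma pairing_class_indicator_deg_homogeneous:
  assumes "g \<in> L" "homogeneous g"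
  shows "pairing (class_indicator_deg x d) g = 0"
proof -
  obtain e where e: "\<And>\<alpha>. \<alpha> \<in> Poly_Mapping.keys g \<Longrightarrow> mdeg \<alpha> = e"
    using assms(2) unfolding homogeneous_def hom_part_def by blast
  show ?thesis
  proof (cases "int e = d")
    case True
    then have "pairing (class_indicator_deg x d) g = pairing (class_indicator x) g"
      unfolding pairing_def by (intro sum.cong refl) (simp add: class_indicator_deg_def class_indicator_def e)
    then show ?thesis using pairing_class_indicator_eq_0[OF assms(1)] by simp
  next
    case False
    then show ?thesis
      unfolding pairing_def by (intro sum.neutral) (simp add: class_indicator_deg_def e)
  qed
qed

lemma pairing_class_indicator_deg_eq_0:
  assumes "f \<in> L"
  shows "pairing (class_indicator_deg x d) f = 0"
proof -
  obtain G where G: "\<forall>g\<in>G. homogeneous g" "L = ideal_gen G"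
    using graded unfolding graded_ideal_def by blast
  let ?H = "range (case_prod class_indicator_deg)"
  show ?thesis
  proof (rule pairing_ideal_gen_eq_0[where H = ?H and X = G])
    fix h \<beta> assume "h \<in> ?H"
    then show "(\<lambda>\<alpha>. h (\<beta> + \<alpha>)) \<in> ?H"
      using class_indicator_deg_shift by (auto intro: range_eqI[of _ _ "(_, _)"])
  next
    fix g h assume "g \<in> G" "h \<in> ?H"
    then show "pairing h g = 0"
      using G pairing_class_indicator_deg_homogeneous ideal_gen.gen[of g G] by auto
  qed (use assms G(2) in \<open>auto intro: range_eqI[of _ _ "(x, d)"]\<close>)
qed

text \<open>Pairing with the indicator of the degree-d class of \<alpha> reads off the coefficient of the
  unique standard monomial of that class.\<close>

lemma eq_0_if_keys_std:
  assumes g: "g \<in> L" and keys: "Poly_Mapping.keys g \<subseteq> monomials_deg d - nonstd"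
  shows "g = 0"
proof (rule ccontr)
  assume "g \<noteq> 0"
  then obtain \<alpha> where \<alpha>: "\<alpha> \<in> Poly_Mapping.keys g" by fastforce
  let ?x = "\<lambda>v. int (Poly_Mapping.lookup \<alpha> v)"
  have "class_indicator_deg ?x (int d) \<beta> = (if \<beta> = \<alpha> then 1 else 0)"
    if \<beta>: "\<beta> \<in> Poly_Mapping.keys g" for \<beta>
  proof -
    have "std \<alpha> = \<beta>" if "lat_equiv \<beta> \<alpha>" "mdeg \<beta> = d"
    proof (rule std_eq_if_notin_nonstd)
      show "\<beta> \<in> lat_class \<alpha>" using that keys \<alpha> by (auto simp: lat_class_def monomials_deg_def)
      show "\<beta> \<notin> nonstd" using keys \<beta> by auto
    qed
    moreover have "std \<alpha> = \<alpha>" using keys \<alpha> by (auto simp: nonstd_def)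
    ultimately show ?thesis
      using keys \<alpha> lattice_zero by (auto simp: class_indicator_deg_def monomials_deg_def lat_equiv_def)
  qed
  then have "pairing (class_indicator_deg ?x (int d)) g
      = (\<Sum>\<beta>\<in>Poly_Mapping.keys g. if \<beta> = \<alpha> then Poly_Mapping.lookup g \<beta> else 0)"
    unfolding pairing_def by (intro sum.cong) simp_all
  also have "\<dots> = Poly_Mapping.lookup g \<alpha>" using \<alpha> by simp
  finally have "pairing (class_indicator_deg ?x (int d)) g = Poly_Mapping.lookup g \<alpha>" .
  then show False using pairing_class_indicator_deg_eq_0[OF g] \<alpha> by (simp add: in_keys_iff)
qed

definition std_binomial :: "('v \<Rightarrow>\<^sub>0 nat) \<Rightarrow> ('v, 'a) mpoly" where
  "std_binomial \<alpha> = Poly_Mapping.single \<alpha> 1 - Poly_Mapping.single (std \<alpha>) 1"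

lemma std_binomial_in_L: "std_binomial \<alpha> \<in> L"
  unfolding std_binomial_def by (rule binomial_in_L[OF lat_equiv_sym[OF lat_equiv_std]])

lemma std_binomial_in_hom_part: "std_binomial \<alpha> \<in> hom_part (mdeg \<alpha>)"
  using keys_diff[of "Poly_Mapping.single \<alpha> (1::'a)" "Poly_Mapping.single (std \<alpha>) 1"] mdeg_std[of \<alpha>]
  by (auto simp: std_binomial_def hom_part_def)

lemma lookup_std_binomial:
  assumes "\<alpha> \<in> nonstd" "\<beta> \<in> nonstd"
  shows "Poly_Mapping.lookup (std_binomial \<beta>) \<alpha> = (if \<alpha> = \<beta> then 1 else 0)"
  using assms std_notin_nonstd[of \<beta>] by (auto simp: std_binomial_def lookup_minus lookup_single when_def)

lemma L_hom_part_eq_sum_std_binomial: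
  assumes f: "f \<in> L \<inter> hom_part d"
  shows "f = (\<Sum>\<alpha>\<in>monomials_deg d \<inter> nonstd. scal (Poly_Mapping.lookup f \<alpha>) (std_binomial \<alpha>))"
proof -
  define A where "A = monomials_deg d \<inter> nonstd"
  have finA: "finite A" unfolding A_def by (simp add: finite_monomials_deg)
  define g where "g = f - (\<Sum>\<alpha>\<in>A. scal (Poly_Mapping.lookup f \<alpha>) (std_binomial \<alpha>))"
  have "g \<in> L" unfolding g_def scal_def L_eq_ideal_gen
    using f std_binomial_in_L unfolding L_eq_ideal_gen
    by (intro ideal_gen_diff ideal_gen_sum ideal_gen.mult) auto
  moreover have "Poly_Mapping.keys g \<subseteq> monomials_deg d - nonstd"
  proof
    fix \<gamma> assume \<gamma>: "\<gamma> \<in> Poly_Mapping.keys g"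
    have lookup_g: "Poly_Mapping.lookup g \<gamma> = Poly_Mapping.lookup f \<gamma> -
        (\<Sum>\<alpha>\<in>A. Poly_Mapping.lookup f \<alpha> * Poly_Mapping.lookup (std_binomial \<alpha>) \<gamma>)"
      by (simp add: g_def lookup_minus lookup_sum lookup_scal)
    have "Poly_Mapping.lookup g \<gamma> = 0" if "\<gamma> \<in> A"
    proof -
      have "(\<Sum>\<alpha>\<in>A. Poly_Mapping.lookup f \<alpha> * Poly_Mapping.lookup (std_binomial \<alpha>) \<gamma>)
          = (\<Sum>\<alpha>\<in>A. if \<alpha> = \<gamma> then Poly_Mapping.lookup f \<alpha> else 0)"
        by (rule sum.cong) (use that lookup_std_binomial in \<open>auto simp: A_def\<close>)
      then show ?thesis using that finA by (simp add: lookup_g)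
    qed
    moreover have "Poly_Mapping.lookup g \<gamma> = 0" if "\<gamma> \<notin> monomials_deg d"
    proof -
      have "Poly_Mapping.lookup f \<gamma> = 0" using f that by (auto simp: hom_part_eq_keys_subset in_keys_iff)
      moreover have "Poly_Mapping.lookup (std_binomial \<alpha>) \<gamma> = 0" if "\<alpha> \<in> A" for \<alpha>
        using std_binomial_in_hom_part[of \<alpha>] \<open>\<gamma> \<notin> monomials_deg d\<close> \<open>\<alpha> \<in> A\<close>
        by (auto simp: hom_part_eq_keys_subset A_def monomials_deg_def in_keys_iff)
      ultimately show ?thesis by (simp add: lookup_g)
    qed
    ultimately show "\<gamma> \<in> monomials_deg d - nonstd" using \<gamma> by (auto simp: A_def in_keys_iff)
  qed
  ultimately have "g = 0" by (rule eq_0_if_keys_std)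
  then show ?thesis by (simp add: g_def A_def)
qed

lemma dim_L_hom_part: "mpoly.dim (L \<inter> hom_part d) = card (monomials_deg d \<inter> nonstd)"
proof -
  define A where "A = monomials_deg d \<inter> nonstd"
  have finA: "finite A" unfolding A_def by (simp add: finite_monomials_deg)
  have tri: "Poly_Mapping.lookup (std_binomial \<beta>) \<alpha> = (if \<alpha> = \<beta> then 1 else 0)"
    if "\<alpha> \<in> A" "\<beta> \<in> A" for \<alpha> \<beta>
    using that lookup_std_binomial by (simp add: A_def)
  have inj: "inj_on std_binomial A"
  proof (rule inj_onI)
    fix \<alpha> \<beta> assume "\<alpha> \<in> A" "\<beta> \<in> A" "std_binomial \<alpha> = std_binomial \<beta>"
    then show "\<alpha> = \<beta>" using tri[of \<alpha> \<alpha>] tri[of \<alpha> \<beta>] by (auto split: if_splits)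
  qed
  have "mpoly.dim (L \<inter> hom_part d) = card (std_binomial ` A)"
  proof (rule mpoly.dim_unique[OF _ _ independent_unitriangular[OF finA inj tri] refl])
    show "std_binomial ` A \<subseteq> L \<inter> hom_part d"
      using std_binomial_in_L std_binomial_in_hom_part by (auto simp: A_def monomials_deg_def)
    show "L \<inter> hom_part d \<subseteq> mpoly.span (std_binomial ` A)"
    proof
      fix f assume "f \<in> L \<inter> hom_part d"
      then have "f = (\<Sum>\<alpha>\<in>A. scal (Poly_Mapping.lookup f \<alpha>) (std_binomial \<alpha>))"
        unfolding A_def by (rule L_hom_part_eq_sum_std_binomial)
      also have "\<dots> \<in> mpoly.span (std_binomial ` A)"
        by (intro mpoly.span_sum mpoly.span_scale mpoly.span_base) auto
      finally show "f \<in> mpoly.span (std_binomial ` A)" .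
    qed
  qed
  then show ?thesis using card_image[OF inj] by (simp add: A_def)
qed

lemma hilbert_fun_L: "hilbert_fun L d = card (monomials_deg d - nonstd)"
proof -
  have "hilbert_fun L d = card (monomials_deg d :: ('v \<Rightarrow>\<^sub>0 nat) set) - card (monomials_deg d \<inter> nonstd)"
    by (simp add: hilbert_fun_def dim_hom_part dim_L_hom_part)
  also have "\<dots> = card (monomials_deg d - nonstd)"
    by (rule card_Diff_subset_Int[symmetric]) (simp add: finite_monomials_deg)
  finally show ?thesis .
qed

lemma eventually_poly_hilbert_fun_L: "eventually_poly (hilbert_fun L)"
proof -
  have "hilbert_fun L = (\<lambda>d. card (monomials_deg d - nonstd))"
    using hilbert_fun_L by blast
  then show ?thesis using eventually_poly_card_diff_monoid_ideal[OF nonstd_add] by simp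
qed

end

section \<open>Lattice ideals of dimension one\<close>

definition axis_diff :: "'v \<Rightarrow> 'v \<Rightarrow> nat \<Rightarrow> 'v \<Rightarrow> int" where
  "axis_diff z v k = (\<lambda>w. if w = v then int k else if w = z then - int k else 0)"

context graded_lattice_ideal
begin

lemma hilbert_fun_L_ge_if_no_axis_multiple:
  assumes "v \<noteq> z" and no_multiple: "\<And>k. k > 0 \<Longrightarrow> axis_diff z v k \<notin> \<Lambda>"
  shows "d + 1 \<le> hilbert_fun L d"
proof -
  define \<pi> where "\<pi> k = Poly_Mapping.single v k + Poly_Mapping.single z (d - k)" for k
  have not_equiv: "\<not> lat_equiv (\<pi> j) (\<pi> k)" if "j \<le> d" "k < j" for j k
  proof
    have "(\<lambda>w. int (Poly_Mapping.lookup (\<pi> j) w) - int (Poly_Mapping.lookup (\<pi> k) w)) = axis_diff z v (j - k)"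
      using that \<open>v \<noteq> z\<close> by (auto simp: \<pi>_def lookup_add lookup_single when_def axis_diff_def of_nat_diff)
    moreover assume "lat_equiv (\<pi> j) (\<pi> k)"
    ultimately show False using no_multiple[of "j - k"] that by (simp add: lat_equiv_def)
  qed
  have "inj_on (\<lambda>k. std (\<pi> k)) {0..d}"
  proof (rule inj_onI)
    fix j k assume jk: "j \<in> {0..d}" "k \<in> {0..d}" "std (\<pi> j) = std (\<pi> k)"
    then have "lat_equiv (\<pi> j) (\<pi> k)" "lat_equiv (\<pi> k) (\<pi> j)"
      using lat_equiv_if_std_eq lat_equiv_sym by blast+
    show "j = k"
    proof (rule ccontr)
      assume "j \<noteq> k"
      then consider "k < j" | "j < k" by linarith
      then show False using not_equiv[of j k] not_equiv[of k j] jk(1,2) \<open>lat_equiv (\<pi> j) (\<pi> k)\<close>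
          \<open>lat_equiv (\<pi> k) (\<pi> j)\<close> by cases auto
    qed
  qed
  then have "d + 1 = card ((\<lambda>k. std (\<pi> k)) ` {0..d})" by (simp add: card_image)
  also have "\<dots> \<le> card (monomials_deg d - nonstd)"
  proof (rule card_mono)
    show "finite (monomials_deg d - nonstd)" by (simp add: finite_monomials_deg)
    show "(\<lambda>k. std (\<pi> k)) ` {0..d} \<subseteq> monomials_deg d - nonstd"
      using std_notin_nonstd mdeg_std by (auto simp: monomials_deg_def \<pi>_def mdeg_add)
  qed
  finally show ?thesis by (simp add: hilbert_fun_L)
qed

text \<open>A constant Hilbert polynomial cannot dominate d + 1.\<close>

lemma axis_multiple_in_lattice:
  assumes "quot_dim L = 1" "v \<noteq> z"
  shows "\<exists>k>0. axis_diff z v k \<in> \<Lambda>"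
proof (rule ccontr)
  assume "\<not> ?thesis"
  then have grow: "d + 1 \<le> hilbert_fun L d" for d
    using hilbert_fun_L_ge_if_no_axis_multiple[OF assms(2)] by blast
  obtain p where p: "\<forall>\<^sub>F d in sequentially. poly p (real d) = real (hilbert_fun L d)"
    using eventually_poly_hilbert_fun_L by (auto simp: eventually_poly_def)
  then have "hilbert_poly L = p" by (rule hilbert_poly_eqI)
  then have "degree p = 0" using assms(1) by (simp add: quot_dim_def split: if_splits)
  then obtain c where "p = [:c:]" using degree_0_id by metis
  with p have "\<forall>\<^sub>F d in sequentially. c = real (hilbert_fun L d)" by simp
  moreover obtain N :: nat where N: "c < real N" using reals_Archimedean2 by blast
  have "c < real (hilbert_fun L d)" if "N \<le> d" for d
  proof -
    have "real N \<le> real d" "real (d + 1) \<le> real (hilbert_fun L d)"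
      using that grow[of d] by (simp_all only: of_nat_le_iff)
    then show ?thesis using N by simp
  qed
  then have "\<forall>\<^sub>F d in sequentially. c < real (hilbert_fun L d)"
    by (auto simp: eventually_sequentially)
  ultimately have "\<forall>\<^sub>F d in sequentially. False" by eventually_elim simp
  then show False by simp
qed

lemma inj_on_std_add: "inj_on (\<lambda>\<alpha>. std (\<alpha> + \<gamma>)) (monomials_deg d - nonstd)"
proof (rule inj_onI)
  fix \<alpha> \<beta> assume \<alpha>: "\<alpha> \<in> monomials_deg d - nonstd" and \<beta>: "\<beta> \<in> monomials_deg d - nonstd"
    and eq: "std (\<alpha> + \<gamma>) = std (\<beta> + \<gamma>)"
  from eq have "lat_equiv (\<alpha> + \<gamma>) (\<beta> + \<gamma>)" by (rule lat_equiv_if_std_eq)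
  then have "lat_equiv \<beta> \<alpha>" by (simp add: lat_equiv_add_right_cancel lat_equiv_sym)
  then have "\<beta> \<in> lat_class \<alpha>" using \<alpha> \<beta> by (simp add: lat_class_def monomials_deg_def)
  then have "std \<alpha> = \<beta>" using \<beta> by (intro std_eq_if_notin_nonstd) auto
  then show "\<alpha> = \<beta>" using \<alpha> by (simp add: nonstd_def)
qed

text \<open>Trading t_v^(n_v) for t_z^(n_v) stays in the class; once all \<alpha>_v < n_v, the degree bound
  forces \<alpha>_z \<ge> 1.\<close>

lemma ex_lat_class_lookup_pos:
  assumes n: "\<And>v. v \<noteq> z \<Longrightarrow> 0 < n v \<and> axis_diff z v (n v) \<in> \<Lambda>"
    and deg: "(\<Sum>v\<in>UNIV - {z}. n v - 1) + 1 \<le> mdeg \<gamma>"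
  shows "\<exists>\<gamma>'\<in>lat_class \<gamma>. 1 \<le> Poly_Mapping.lookup \<gamma>' z"
  using deg
proof (induction "mdeg \<gamma> - Poly_Mapping.lookup \<gamma> z" arbitrary: \<gamma> rule: less_induct)
  case less
  show ?case
  proof (cases "\<forall>v. v \<noteq> z \<longrightarrow> Poly_Mapping.lookup \<gamma> v < n v")
    case True
    then have "(\<Sum>v\<in>UNIV - {z}. Poly_Mapping.lookup \<gamma> v) \<le> (\<Sum>v\<in>UNIV - {z}. n v - 1)"
      by (intro sum_mono) auto
    then have "1 \<le> Poly_Mapping.lookup \<gamma> z"
      using less.prems mdeg_eq_lookup_plus_sum[of \<gamma> z] by linarith
    then show ?thesis using lat_class_self by blast
  next
    case False
    then obtain v where v: "v \<noteq> z" "n v \<le> Poly_Mapping.lookup \<gamma> v" by (auto simp: not_less)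
    define \<gamma>\<^sub>0 where "\<gamma>\<^sub>0 = \<gamma> - Poly_Mapping.single v (n v)"
    have \<gamma>_eq: "\<gamma> = \<gamma>\<^sub>0 + Poly_Mapping.single v (n v)"
      by (rule poly_mapping_eqI) (use v in \<open>auto simp: \<gamma>\<^sub>0_def lookup_add lookup_minus lookup_single when_def\<close>)
    define \<delta> where "\<delta> = \<gamma>\<^sub>0 + Poly_Mapping.single z (n v)"
    have lookup_\<delta>: "Poly_Mapping.lookup \<delta> w = Poly_Mapping.lookup \<gamma> w
        - (if w = v then n v else 0) + (if w = z then n v else 0)" for w
      by (subst \<gamma>_eq) (simp add: \<delta>_def lookup_add lookup_single when_def)
    have "(\<lambda>w. int (Poly_Mapping.lookup \<delta> w) - int (Poly_Mapping.lookup \<gamma> w)) = (\<lambda>w. - axis_diff z v (n v) w)"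
      using v by (auto simp: lookup_\<delta> axis_diff_def of_nat_diff)
    then have "lat_equiv \<delta> \<gamma>" using lattice_uminus n[OF v(1)] by (simp add: lat_equiv_def)
    moreover have "mdeg \<delta> = mdeg \<gamma>" by (subst \<gamma>_eq) (simp add: \<delta>_def mdeg_add)
    ultimately have \<delta>: "\<delta> \<in> lat_class \<gamma>" by (simp add: lat_class_def)
    have "Poly_Mapping.lookup \<gamma> z < Poly_Mapping.lookup \<delta> z"
      using n[OF v(1)] v(1) by (simp add: lookup_\<delta>)
    then have "mdeg \<delta> - Poly_Mapping.lookup \<delta> z < mdeg \<gamma> - Poly_Mapping.lookup \<gamma> z"
      using lookup_le_mdeg[of \<delta> z] \<open>mdeg \<delta> = mdeg \<gamma>\<close> by linarith
    then have "\<exists>\<gamma>'\<in>lat_class \<delta>. 1 \<le> Poly_Mapping.lookup \<gamma>' z"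
      using less.hyps less.prems \<open>mdeg \<delta> = mdeg \<gamma>\<close> by simp
    then show ?thesis using lat_class_eq[OF \<delta>] by simp
  qed
qed

lemma card_std_monomials_deg_Suc:
  assumes n: "\<And>v. v \<noteq> z \<Longrightarrow> 0 < n v \<and> axis_diff z v (n v) \<in> \<Lambda>"
    and d: "(\<Sum>v\<in>UNIV - {z}. n v - 1) \<le> d"
  shows "card (monomials_deg (Suc d) - nonstd) = card (monomials_deg d - nonstd)"
proof -
  define e where "e = Poly_Mapping.single z (1::nat)"
  have "(\<lambda>\<alpha>. std (\<alpha> + e)) ` (monomials_deg d - nonstd) = monomials_deg (Suc d) - nonstd"
  proof
    show "(\<lambda>\<alpha>. std (\<alpha> + e)) ` (monomials_deg d - nonstd) \<subseteq> monomials_deg (Suc d) - nonstd"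
      using std_notin_nonstd mdeg_std by (auto simp: monomials_deg_def mdeg_add e_def)
    show "monomials_deg (Suc d) - nonstd \<subseteq> (\<lambda>\<alpha>. std (\<alpha> + e)) ` (monomials_deg d - nonstd)"
    proof
      fix \<gamma> assume \<gamma>: "\<gamma> \<in> monomials_deg (Suc d) - nonstd"
      obtain \<gamma>' where \<gamma>': "\<gamma>' \<in> lat_class \<gamma>" "1 \<le> Poly_Mapping.lookup \<gamma>' z"
        using ex_lat_class_lookup_pos[OF n, of \<gamma>] \<gamma> d by (auto simp: monomials_deg_def)
      define \<alpha> where "\<alpha> = \<gamma>' - e"
      have \<gamma>'_eq: "\<gamma>' = \<alpha> + e"
        by (rule poly_mapping_eqI) (use \<gamma>'(2) in \<open>auto simp: \<alpha>_def e_def lookup_add lookup_minus lookup_single when_def\<close>)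
      have "mdeg \<alpha> = d"
        using \<gamma>' \<gamma> by (simp add: \<gamma>'_eq lat_class_def monomials_deg_def mdeg_add e_def)
      have "std \<alpha> + e \<in> lat_class \<gamma>"
        using lat_class_add[OF std_in_lat_class, of \<alpha> e] lat_class_eq[OF \<gamma>'(1)] by (simp add: \<gamma>'_eq)
      then have "std (std \<alpha> + e) = \<gamma>" using std_cong \<gamma> by (simp add: nonstd_def)
      moreover have "std \<alpha> \<in> monomials_deg d - nonstd"
        using std_notin_nonstd mdeg_std \<open>mdeg \<alpha> = d\<close> by (simp add: monomials_deg_def)
      ultimately show "\<gamma> \<in> (\<lambda>\<alpha>. std (\<alpha> + e)) ` (monomials_deg d - nonstd)"
        using image_eqI[of \<gamma> "\<lambda>\<alpha>. std (\<alpha> + e)" "std \<alpha>"] by simp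
    qed
  qed
  then show ?thesis using card_image[OF inj_on_std_add[of e d]] by simp
qed

lemma hilbert_fun_L_eq_of_ge:
  assumes "\<And>v. v \<noteq> z \<Longrightarrow> 0 < n v \<and> axis_diff z v (n v) \<in> \<Lambda>"
    and "(\<Sum>v\<in>UNIV - {z}. n v - 1) \<le> d"
  shows "hilbert_fun L d = hilbert_fun L (\<Sum>v\<in>UNIV - {z}. n v - 1)"
  using assms(2)
proof (induction d rule: dec_induct)
  case (step d)
  then show ?case using card_std_monomials_deg_Suc[OF assms(1) step(1)] by (simp add: hilbert_fun_L)
qed simp

lemma var_power_diff_in_L:
  assumes "v \<noteq> z" "axis_diff z v k \<in> \<Lambda>"
  shows "var v ^ k - var z ^ k \<in> L"
proof -
  have "Abs_poly_mapping (pos_part (axis_diff z v k)) = Poly_Mapping.single v k"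
    by (rule poly_mapping_eqI) (use assms(1) in \<open>auto simp: pos_part_def axis_diff_def lookup_single when_def\<close>)
  moreover have "Abs_poly_mapping (neg_part (axis_diff z v k)) = Poly_Mapping.single z k"
    by (rule poly_mapping_eqI) (use assms(1) in \<open>auto simp: neg_part_def axis_diff_def lookup_single when_def\<close>)
  ultimately have "var v ^ k - var z ^ k
      = (mono (pos_part (axis_diff z v k)) - mono (neg_part (axis_diff z v k)) :: ('v, 'a) mpoly)"
    by (simp add: mono_eq_single var_power)
  also have "\<dots> \<in> L" unfolding L_eq_ideal_gen by (rule ideal_gen.gen) (use assms(2) in blast)
  finally show ?thesis .
qed

lemma hilbert_fun_L_stable:
  assumes n: "\<And>v. v \<noteq> z \<Longrightarrow> 0 < n v \<and> axis_diff z v (n v) \<in> \<Lambda>"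
    and "quot_dim L = 1" and d: "(\<Sum>v\<in>UNIV - {z}. n v - 1) < d"
  shows "hilbert_fun L d = hilbert_fun L (d - 1)" and "real (hilbert_fun L d) = quot_deg L"
proof -
  let ?M = "\<Sum>v\<in>UNIV - {z}. n v - 1"
  have const: "hilbert_fun L e = hilbert_fun L ?M" if "?M \<le> e" for e
    using hilbert_fun_L_eq_of_ge[of z n e] n that by blast
  show "hilbert_fun L d = hilbert_fun L (d - 1)"
    using const[of d] const[of "d - 1"] d by simp
  show "real (hilbert_fun L d) = quot_deg L"
    using const[of d] d quot_deg_eq_const[of ?M L, OF const assms(2)] by simp
qed

end

section \<open>The binomial ideal L' and its box\<close>

definition binomials :: "('v \<Rightarrow> nat) \<Rightarrow> 'v \<Rightarrow> ('v, 'a::comm_ring_1) mpoly set" where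
  "binomials n z = {var v ^ n v - var z ^ n v | v. v \<noteq> z}"

definition box :: "('v \<Rightarrow> nat) \<Rightarrow> 'v \<Rightarrow> ('v \<Rightarrow>\<^sub>0 nat) set" where
  "box n z = {\<alpha>. Poly_Mapping.lookup \<alpha> z = 0 \<and> (\<forall>v. v \<noteq> z \<longrightarrow> Poly_Mapping.lookup \<alpha> v < n v)}"

definition box_ideal :: "('v \<Rightarrow> nat) \<Rightarrow> 'v \<Rightarrow> ('v, 'a::comm_ring_1) mpoly set" where
  "box_ideal n z = ideal_gen (insert (var z) (ideal_gen (binomials n z)))"

lemma box_ideal_keys_disjoint:
  assumes "f \<in> box_ideal n z"
  shows "Poly_Mapping.keys (f :: ('v, 'a::comm_ring_1) mpoly) \<inter> box n z = {}"
proof -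
  have binomial: "Poly_Mapping.keys g \<inter> box n z = {}" if "g \<in> binomials n z" for g :: "('v, 'a) mpoly"
  proof -
    obtain v where v: "v \<noteq> z" "g = var v ^ n v - var z ^ n v" using \<open>g \<in> binomials n z\<close>
      by (auto simp: binomials_def)
    then have "Poly_Mapping.keys g \<subseteq> {Poly_Mapping.single v (n v), Poly_Mapping.single z (n v)}"
      using keys_diff[of "Poly_Mapping.single (Poly_Mapping.single v (n v)) (1::'a)"
          "Poly_Mapping.single (Poly_Mapping.single z (n v)) 1"]
      by (auto simp: var_power)
    moreover have "Poly_Mapping.single v (n v) \<notin> box n z"
    proof
      assume "Poly_Mapping.single v (n v) \<in> box n z"
      then have "Poly_Mapping.lookup (Poly_Mapping.single v (n v)) v < n v"
        using v(1) unfolding box_def by blast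
      then show False by simp
    qed
    moreover have "Poly_Mapping.single z (n v) \<notin> box n z" if "n v \<noteq> 0" using that by (simp add: box_def)
    ultimately show ?thesis using v by (cases "n v = 0") auto
  qed
  have binomial_ideal: "Poly_Mapping.keys g \<inter> box n z = {}" if "g \<in> ideal_gen (binomials n z)"
    for g :: "('v, 'a) mpoly"
    by (rule ideal_gen_keys_disjoint[where B = "box n z"])
      (use binomial that in \<open>auto simp: box_def lookup_add\<close>)
  have var_z: "Poly_Mapping.keys (var z :: ('v, 'a) mpoly) \<inter> box n z = {}"
    by (simp add: var_def box_def)
  show ?thesis
    by (rule ideal_gen_keys_disjoint[where B = "box n z"])
      (use assms binomial_ideal var_z in \<open>auto simp: box_def box_ideal_def lookup_add\<close>)
qed

lemma single_in_box_ideal_if_z: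
  assumes "1 \<le> Poly_Mapping.lookup \<alpha> z"
  shows "Poly_Mapping.single \<alpha> (1::'a::comm_ring_1) \<in> box_ideal n z"
proof -
  have "\<alpha> = (\<alpha> - Poly_Mapping.single z 1) + Poly_Mapping.single z 1"
    by (rule poly_mapping_eqI) (use assms in \<open>auto simp: lookup_add lookup_minus lookup_single when_def\<close>)
  then have "Poly_Mapping.single \<alpha> (1::'a) = Poly_Mapping.single (\<alpha> - Poly_Mapping.single z 1) 1 * var z"
    by (metis mult_single mult_1 var_def)
  also have "\<dots> \<in> box_ideal n z" unfolding box_ideal_def by (intro ideal_gen.mult ideal_gen.gen) simp
  finally show ?thesis .
qed

lemma single_in_box_ideal:
  assumes npos: "\<And>v. v \<noteq> z \<Longrightarrow> 0 < n v" and \<alpha>: "\<alpha> \<notin> box n z"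
  shows "Poly_Mapping.single \<alpha> (1::'a::comm_ring_1) \<in> box_ideal n z"
proof (cases "1 \<le> Poly_Mapping.lookup \<alpha> z")
  case True then show ?thesis by (rule single_in_box_ideal_if_z)
next
  case False
  then obtain v where v: "v \<noteq> z" "n v \<le> Poly_Mapping.lookup \<alpha> v" using \<alpha> by (auto simp: box_def not_less)
  define \<beta> where "\<beta> = \<alpha> - Poly_Mapping.single v (n v)"
  have "\<alpha> = \<beta> + Poly_Mapping.single v (n v)"
    by (rule poly_mapping_eqI) (use v in \<open>auto simp: \<beta>_def lookup_add lookup_minus lookup_single when_def\<close>)
  then have "Poly_Mapping.single \<alpha> (1::'a) = Poly_Mapping.single \<beta> 1 * (var v ^ n v - var z ^ n v)
      + Poly_Mapping.single (\<beta> + Poly_Mapping.single z (n v)) 1"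
    by (simp add: var_power mult_single algebra_simps)
  also have "\<dots> \<in> box_ideal n z"
  proof (rule ideal_gen.add[of _ "insert (var z) (ideal_gen (binomials n z))", folded box_ideal_def])
    show "Poly_Mapping.single \<beta> 1 * (var v ^ n v - var z ^ n v) \<in> box_ideal n z"
      unfolding box_ideal_def
      by (intro ideal_gen.mult ideal_gen.gen insertI2) (use v in \<open>auto simp: binomials_def\<close>)
    show "Poly_Mapping.single (\<beta> + Poly_Mapping.single z (n v)) (1::'a) \<in> box_ideal n z"
      by (rule single_in_box_ideal_if_z) (use npos[OF v(1)] in \<open>simp add: lookup_add\<close>)
  qed
  finally show ?thesis .
qed

lemma box_ideal_hom_part:
  assumes "\<And>v. v \<noteq> z \<Longrightarrow> 0 < n v"
  shows "box_ideal n z \<inter> hom_part d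
     = {f :: ('v::finite, 'a::comm_ring_1) mpoly. Poly_Mapping.keys f \<subseteq> monomials_deg d - box n z}"
    (is "_ = ?B")
proof
  show "box_ideal n z \<inter> hom_part d \<subseteq> ?B"
    using box_ideal_keys_disjoint by (fastforce simp: hom_part_eq_keys_subset)
  show "?B \<subseteq> box_ideal n z \<inter> hom_part d"
  proof
    fix f assume f: "f \<in> ?B"
    have "f = (\<Sum>\<alpha>\<in>Poly_Mapping.keys f. Poly_Mapping.single 0 (Poly_Mapping.lookup f \<alpha>) * Poly_Mapping.single \<alpha> 1)"
      using poly_mapping_sum_single[of "Poly_Mapping.keys f" f] by (simp add: mult_single)
    also have "\<dots> \<in> box_ideal n z"
      using single_in_box_ideal[of z n] assms f unfolding box_ideal_def
      by (auto intro!: ideal_gen_sum ideal_gen.mult)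
    finally show "f \<in> box_ideal n z \<inter> hom_part d" using f by (auto simp: hom_part_eq_keys_subset)
  qed
qed

lemma hilbert_fun_box_ideal:
  assumes "\<And>v. v \<noteq> z \<Longrightarrow> 0 < n v"
  shows "hilbert_fun (box_ideal n z :: ('v::finite, 'a::field) mpoly set) d = card (monomials_deg d \<inter> box n z)"
proof -
  have fin: "finite (monomials_deg d :: ('v \<Rightarrow>\<^sub>0 nat) set)" by (rule finite_monomials_deg)
  have "hilbert_fun (box_ideal n z :: ('v, 'a) mpoly set) d
      = card (monomials_deg d :: ('v \<Rightarrow>\<^sub>0 nat) set) - card (monomials_deg d - box n z)"
    by (simp add: hilbert_fun_def box_ideal_hom_part[of z n, OF assms] dim_hom_part dim_keys_subset
        finite_monomials_deg)
  also have "\<dots> = card (monomials_deg d \<inter> box n z)"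
    using card_Diff_subset_Int[of "monomials_deg d" "box n z"] fin card_mono[OF fin, of "monomials_deg d \<inter> box n z"]
    by auto
  finally show ?thesis .
qed

lemma mdeg_le_if_in_box:
  assumes "\<alpha> \<in> box n z"
  shows "mdeg (\<alpha> :: 'v::finite \<Rightarrow>\<^sub>0 nat) \<le> (\<Sum>v\<in>UNIV - {z}. n v - 1)"
proof -
  have "mdeg \<alpha> = (\<Sum>v\<in>UNIV - {z}. Poly_Mapping.lookup \<alpha> v)"
    using assms mdeg_eq_lookup_plus_sum[of \<alpha> z] by (simp add: box_def)
  also have "\<dots> \<le> (\<Sum>v\<in>UNIV - {z}. n v - 1)"
    by (rule sum_mono) (use assms in \<open>auto simp: box_def\<close>)
  finally show ?thesis .
qed

lemma box_corner_in_box: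
  assumes "\<And>v. v \<noteq> z \<Longrightarrow> 0 < n v"
  defines "c \<equiv> Abs_poly_mapping (\<lambda>w. if w = z then 0 else n w - 1)"
  shows "c \<in> monomials_deg (\<Sum>v\<in>UNIV - {z}. n v - 1) \<inter> box n (z :: 'v::finite)"
proof -
  have "mdeg c = (\<Sum>v\<in>UNIV - {z}. n v - 1)"
    unfolding mdeg_eq_lookup_plus_sum[of c z] by (simp add: c_def)
  moreover have "c \<in> box n z" using assms(1) by (simp add: c_def box_def)
  ultimately show ?thesis by (simp add: monomials_deg_def)
qed

lemma hilbert_fun_eq_0_if_box_ideal_subset:
  assumes "\<And>v. v \<noteq> z \<Longrightarrow> 0 < n v" and "box_ideal n z \<subseteq> I"
    and "(\<Sum>v\<in>UNIV - {z}. n v - 1) < d"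
  shows "hilbert_fun (I :: ('v::finite, 'a::field) mpoly set) d = 0"
proof -
  have "monomials_deg d \<inter> box n z = {}"
    using assms(3) mdeg_le_if_in_box[of _ n z] by (fastforce simp: monomials_deg_def)
  then have "monomials_deg d - box n z = monomials_deg d" by blast
  then have "box_ideal n z \<inter> hom_part d = hom_part d"
    using box_ideal_hom_part[of z n d, OF assms(1)] by (simp add: hom_part_eq_keys_subset)
  then have "hom_part d \<subseteq> I" using assms(2) by blast
  then show ?thesis by (simp add: hilbert_fun_def Int_absorb1)
qed

lemma reg_index_box_ideal:
  assumes "\<And>v. v \<noteq> z \<Longrightarrow> 0 < n v"
  shows "reg_index (box_ideal n z :: ('v::finite, 'a::field) mpoly set) = (\<Sum>v\<in>UNIV - {z}. n v - 1) + 1"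
proof (rule reg_index_eq)
  show "hilbert_fun (box_ideal n z :: ('v, 'a) mpoly set) d = 0" if "(\<Sum>v\<in>UNIV - {z}. n v - 1) < d" for d
    using hilbert_fun_eq_0_if_box_ideal_subset[of z n, OF assms order_refl that] .
  have "monomials_deg (\<Sum>v\<in>UNIV - {z}. n v - 1) \<inter> box n z \<noteq> {}"
    using box_corner_in_box[of z n, OF assms] by blast
  then show "hilbert_fun (box_ideal n z :: ('v, 'a) mpoly set) (\<Sum>v\<in>UNIV - {z}. n v - 1) \<noteq> 0"
    by (simp add: hilbert_fun_box_ideal[of z n, OF assms] finite_monomials_deg)
qed

context graded_lattice_ideal
begin

lemma ideal_gen_binomials_subset_L:
  assumes "\<And>v. v \<noteq> z \<Longrightarrow> axis_diff z v (n v) \<in> \<Lambda>"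
  shows "ideal_gen (binomials n z) \<subseteq> L"
proof -
  have "binomials n z \<subseteq> L" using var_power_diff_in_L assms by (auto simp: binomials_def)
  then show ?thesis using ideal_gen_mono by (metis ideal_gen_L)
qed

lemma reg_index_insert_var_le:
  assumes "\<And>v. v \<noteq> z \<Longrightarrow> 0 < n v \<and> axis_diff z v (n v) \<in> \<Lambda>"
  shows "reg_index (ideal_gen (insert (var z) L)) \<le> (\<Sum>v\<in>UNIV - {z}. n v - 1) + 1"
proof (rule reg_index_le)
  have "box_ideal n z \<subseteq> ideal_gen (insert (var z) L)"
    using ideal_gen_binomials_subset_L[of z n] assms unfolding box_ideal_def
    by (intro ideal_gen_mono insert_mono) blast
  then show "hilbert_fun (ideal_gen (insert (var z) L)) d = 0" if "(\<Sum>v\<in>UNIV - {z}. n v - 1) < d" for d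
    by (rule hilbert_fun_eq_0_if_box_ideal_subset[of z n, rotated]) (use assms that in auto)
qed

end

theorem proposition3p12:
  fixes L :: "('v::finite, 'a::field) mpoly set" and z :: 'v
  assumes "card (UNIV :: 'v set) \<ge> 2"
    and "is_lattice_ideal L" and "graded_ideal L"
    and "quot_dim L = 1"
  shows "\<exists>n :: 'v \<Rightarrow> nat. (\<forall>v. v \<noteq> z \<longrightarrow> n v > 0) \<and>
     ideal_gen {var v ^ n v - var z ^ n v | v. v \<noteq> z} \<subseteq> L \<and>
     reg_index (ideal_gen (insert (var z) L))
       \<le> reg_index (ideal_gen (insert (var z) (ideal_gen {var v ^ n v - var z ^ n v | v. v \<noteq> z}))) \<and>
     reg_index (ideal_gen (insert (var z) (ideal_gen {var v ^ n v - var z ^ n v | v. v \<noteq> z})))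
       = (\<Sum>v\<in>UNIV - {z}. n v - 1) + 1 \<and>
     (\<forall>d \<ge> (\<Sum>v\<in>UNIV - {z}. n v - 1) + 1.
        hilbert_fun L d = hilbert_fun L (d - 1) \<and> real (hilbert_fun L d) = quot_deg L)"
proof -
  obtain \<Lambda> where "is_lattice \<Lambda>" "L = lattice_ideal_of \<Lambda>"
    using assms(2) by (auto simp: is_lattice_ideal_def)
  then interpret graded_lattice_ideal \<Lambda> L by unfold_locales (use assms(3) in auto)
  define n where "n v = (SOME k. 0 < k \<and> axis_diff z v k \<in> \<Lambda>)" for v
  have n: "0 < n v \<and> axis_diff z v (n v) \<in> \<Lambda>" if "v \<noteq> z" for v
    unfolding n_def by (rule someI_ex) (use axis_multiple_in_lattice[OF assms(4) that] in blast)
  then have npos: "0 < n v" if "v \<noteq> z" for v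
    using that by blast
  show ?thesis
  proof (intro exI[of _ n] conjI)
    show "\<forall>v. v \<noteq> z \<longrightarrow> 0 < n v" using npos by blast
    show "ideal_gen {var v ^ n v - var z ^ n v | v. v \<noteq> z} \<subseteq> L"
      using ideal_gen_binomials_subset_L[of z n] n by (simp add: binomials_def)
    show "\<forall>d \<ge> (\<Sum>v\<in>UNIV - {z}. n v - 1) + 1.
        hilbert_fun L d = hilbert_fun L (d - 1) \<and> real (hilbert_fun L d) = quot_deg L"
      using hilbert_fun_L_stable[of z n] n assms(4) by simp
  qed (use reg_index_insert_var_le[of z n] n in
      \<open>simp_all add: reg_index_box_ideal[of z n, OF npos, unfolded box_ideal_def binomials_def]\<close>)
qed
end
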